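(* In the setting below, the limit $N=\lim_{t\to\infty}(S+tP)^{-1}$ satisfies $$N=S^{-1}-S^{-1}U(U^\top S^{-1}U)^{-1}U^\top S^{-1},$$ where $U^\top S^{-1}U$ is positive definite. In particular $N$ depends only on the sizes $p_i,q_i$ of the bipartition classes of the bipartite components of $G$ and on $s$.
   Context: Let $n\ge3$, $\ell>0$, $\alpha\ge(n-2)\ell$, $S=\alpha I_n+\ell\mathbf{1}_n\mathbf{1}_n^\top$. For a real matrix $P$, $\Delta_i(P)=|P_{ii}|-\sum_{j\ne i}|P_{ij}|$. A signless Laplacian is a real symmetric $n\times n$ matrix $P$ with $P_{ij}\in\{0,1\}$ for $i\ne j$, $P_{ii}\ge0$, and $\Delta_i(P)\in\{0,2\}$ for all $i$; its graph $G$ has vertex set $\{1,\dots,n\}$, an edge $\{i,j\}$ ($i\ne j$) whenever $P_{ij}=1$, and a self-loop $\{i,i\}$ whenever $\Delta_i(P)=2$ (graphs with self-loops are not bipartite). Relabel vertices so that the bipartite components $G_1,\dots,G_r$ come first, each occupying consecutive vertices with one bipartition class (of size $p_i\ge1$) listed first followed by the other (of size $q_i\ge0$), and the remaining $s=n-\sum_{i=1}^r(p_i+q_i)$ vertices lie in non-bipartite components. For $p\ge1,q\ge0$ let $U_{(p,q)}$ be the $(p+q)\times(p+q-1)$ matrix $$U_{(p,q)}=\begin{pmatrix}\mathbf{1}_{p-1}^\top&\mathbf{1}_q^\top\\-I_{p-1}&0\\0&I_q\end{pmatrix},$$ and let $U$ be the $n\times(n-r)$ block-diagonal matrix $U=\operatorname{diag}(U_{(p_1,q_1)},\dots,U_{(p_r,q_r)},I_s)$.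 *)

theory Defs
  imports "HOL-Analysis.Analysis" "Jordan_Normal_Form.Matrix"
begin

definition minv :: "real mat \<Rightarrow> real mat" where
  "minv A = (SOME B. B \<in> carrier_mat (dim_row A) (dim_row A) \<and>
                      A * B = 1\<^sub>m (dim_row A) \<and> B * A = 1\<^sub>m (dim_row A))"

definition pos_def_mat :: "real mat \<Rightarrow> bool" where
  "pos_def_mat A \<longleftrightarrow> (\<exists>k. A \<in> carrier_mat k k \<and> A\<^sup>T = A \<and>
     (\<forall>v \<in> carrier_vec k. v \<noteq> 0\<^sub>v k \<longrightarrow> v \<bullet> (A *\<^sub>v v) > 0))"

definition Delta :: "real mat \<Rightarrow> nat \<Rightarrow> real" where
  "Delta P i = \<bar>P $$ (i,i)\<bar> - (\<Sum>j\<in>{0..<dim_col P} - {i}. \<bar>P $$ (i,j)\<bar>)"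

definition signless_laplacian :: "nat \<Rightarrow> real mat \<Rightarrow> bool" where
  "signless_laplacian n P \<longleftrightarrow> P \<in> carrier_mat n n \<and> P\<^sup>T = P \<and>
     (\<forall>i<n. \<forall>j<n. i \<noteq> j \<longrightarrow> P $$ (i,j) = 0 \<or> P $$ (i,j) = 1) \<and>
     (\<forall>i<n. P $$ (i,i) \<ge> 0) \<and>
     (\<forall>i<n. Delta P i = 0 \<or> Delta P i = 2)"

definition gedge :: "real mat \<Rightarrow> nat \<Rightarrow> nat \<Rightarrow> bool" where
  "gedge P i j \<longleftrightarrow> i < dim_row P \<and> j < dim_row P \<and> i \<noteq> j \<and> P $$ (i,j) = 1"

definition gloop :: "real mat \<Rightarrow> nat \<Rightarrow> bool" where
  "gloop P i \<longleftrightarrow> i < dim_row P \<and> Delta P i = 2"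

definition comp :: "real mat \<Rightarrow> nat \<Rightarrow> nat set" where
  "comp P v = {w. (gedge P)\<^sup>*\<^sup>* v w}"

definition bipartite_with :: "real mat \<Rightarrow> nat set \<Rightarrow> nat set \<Rightarrow> nat set \<Rightarrow> bool" where
  "bipartite_with P C A B \<longleftrightarrow> A \<union> B = C \<and> A \<inter> B = {} \<and>
     (\<forall>v\<in>C. \<not> gloop P v) \<and>
     (\<forall>u\<in>C. \<forall>v\<in>C. gedge P u v \<longrightarrow> (u \<in> A \<longleftrightarrow> v \<in> B))"

definition bipartite :: "real mat \<Rightarrow> nat set \<Rightarrow> bool" where
  "bipartite P C \<longleftrightarrow> (\<exists>A B. bipartite_with P C A B)"

text \<open>Offset (first vertex) of the k-th bipartite block.\<close>
definition off :: "(nat \<times> nat) list \<Rightarrow> nat \<Rightarrow> nat" where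
  "off ps k = sum_list (map (\<lambda>(p,q). p + q) (take k ps))"

definition Ublock :: "nat \<Rightarrow> nat \<Rightarrow> real mat" where
  "Ublock p q = mat (p + q) (p + q - 1) (\<lambda>(i,j).
     if i = 0 then 1 else if j = i - 1 then (if i < p then -1 else 1) else 0)"

definition Umat :: "(nat \<times> nat) list \<Rightarrow> nat \<Rightarrow> real mat" where
  "Umat ps s = diag_block_mat (map (\<lambda>(p,q). Ublock p q) ps @ [1\<^sub>m s])"

definition Smat :: "nat \<Rightarrow> real \<Rightarrow> real \<Rightarrow> real mat" where
  "Smat n \<alpha> l = \<alpha> \<cdot>\<^sub>m 1\<^sub>m n + l \<cdot>\<^sub>m mat n n (\<lambda>_. 1)"

end

theory Submission
  imports Defs "Jordan_Normal_Form.Determinant"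
begin

(*
  Write S = alpha I + l J and M(t) = (S + t P)^-1.  The argument is
  linear algebra about a positive definite S and a positive semidefinite P, applied to
  the combinatorics of the signless Laplacian:

  (1) The kernel of P consists of the "alternating" vertex functions (zero at self-loops,
      sign change along edges); on the given block structure these are exactly the
      block-signed functions, spanned by the signed indicators of the bipartite blocks
      (the columns of a matrix K).  The columns of U are orthogonal to K, and every
      vector orthogonal to the columns of U is block-signed, hence killed by P.
  (2) Abstract limit theorem: if U^T v = 0 implies P v = 0, the columns of U lie in the
      range of P, and M(t) stays bounded, then M(t) -> S^-1 - S^-1 U W^-1 U^T S^-1 with
      W = U^T S^-1 U.  Indeed N := S^-1 - S^-1 U W^-1 U^T S^-1 satisfies (S + t P) N =
      1 - U G for all t, so N = M(t) - M(t) U G, and M(t) U = M(t) P Y = O(1/t).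
  (3) S + t P is alpha-coercive for t >= 0, which gives invertibility and the bound
      |M(t)_ij| <= 1/alpha; W is positive definite as a congruence of S^-1 by the
      injective U; and range(P) contains U by a Gram-matrix argument with P + K K^T.
*)

text \<open>Vectors and matrices are those of \<open>Jordan_Normal_Form\<close>; the homonymous notations of
  \<open>HOL-Analysis\<close> for vector components and inner products are switched off to avoid
  ambiguous parses.\<close>

no_notation vec_nth (infixl \<open>$\<close> 90) and inner (infix \<open>\<bullet>\<close> 70)

lemma mult_mat_entry:
  "A \<in> carrier_mat nr nk \<Longrightarrow> B \<in> carrier_mat nk nc \<Longrightarrow> i < nr \<Longrightarrow> j < nc \<Longrightarrow>
   (A * B) $$ (i,j) = (\<Sum>l<nk. A $$ (i,l) * B $$ (l,j))"
  by (auto simp: scalar_prod_def atLeast0LessThan intro!: sum.cong)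

lemma mult_mat_vec_entry:
  "A \<in> carrier_mat nr nc \<Longrightarrow> v \<in> carrier_vec nc \<Longrightarrow> i < nr \<Longrightarrow>
   (A *\<^sub>v v) $ i = (\<Sum>j<nc. A $$ (i,j) * v $ j)"
  by (auto simp: scalar_prod_def atLeast0LessThan)

lemma col_mult_mat:
  "A \<in> carrier_mat nr nk \<Longrightarrow> B \<in> carrier_mat nk nc \<Longrightarrow> j < nc \<Longrightarrow> col (A * B) j = A *\<^sub>v col B j"
  by (rule eq_vecI) auto

lemma quadratic_form_sum:
  "(A :: real mat) \<in> carrier_mat n n \<Longrightarrow> v \<in> carrier_vec n \<Longrightarrow>
   v \<bullet> (A *\<^sub>v v) = (\<Sum>i<n. \<Sum>j<n. A $$ (i,j) * v $ i * v $ j)"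
  by (auto simp: scalar_prod_def atLeast0LessThan mult_mat_vec_entry sum_distrib_left
      intro!: sum.cong simp del: index_mult_mat_vec)

lemma scalar_prod_self: "(v :: real vec) \<in> carrier_vec n \<Longrightarrow> v \<bullet> v = (\<Sum>i<n. (v $ i)^2)"
  by (simp add: scalar_prod_def atLeast0LessThan power2_eq_square)

lemma scalar_prod_self_pos:
  assumes v: "(v :: real vec) \<in> carrier_vec n" and nz: "v \<noteq> 0\<^sub>v n"
  shows "v \<bullet> v > 0"
proof -
  obtain i where i: "i < n" "v $ i \<noteq> 0"
    using nz v by (metis carrier_vecD eq_vecI index_zero_vec(1,2))
  have "0 < (v $ i)^2" using i by simp
  also have "(v $ i)^2 \<le> (\<Sum>i<n. (v $ i)^2)" by (rule member_le_sum) (use i in auto)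
  finally show ?thesis using scalar_prod_self[OF v] by simp
qed

lemma minv_unique:
  assumes A: "A \<in> carrier_mat n n" and B: "B \<in> carrier_mat n n"
    and AB: "A * B = 1\<^sub>m n" and BA: "B * A = 1\<^sub>m n"
  shows "minv A = B"
proof -
  have "B \<in> carrier_mat (dim_row A) (dim_row A) \<and> A * B = 1\<^sub>m (dim_row A) \<and> B * A = 1\<^sub>m (dim_row A)"
    using A B AB BA by auto
  hence M: "minv A \<in> carrier_mat n n \<and> minv A * A = 1\<^sub>m n"
    unfolding minv_def using A by (metis (mono_tags, lifting) carrier_matD(1) someI)
  have "minv A = minv A * (A * B)" using M AB right_mult_one_mat[of "minv A" n n] by simp
  also have "\<dots> = (minv A * A) * B" using assoc_mult_mat[of "minv A" n n A n B n] M A B by simp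
  also have "\<dots> = B" using M B by simp
  finally show ?thesis .
qed

lemma minv_of_injective:
  assumes A: "A \<in> carrier_mat n n"
    and inj: "\<And>v. v \<in> carrier_vec n \<Longrightarrow> A *\<^sub>v v = 0\<^sub>v n \<Longrightarrow> v = 0\<^sub>v n"
  shows "minv A \<in> carrier_mat n n \<and> A * minv A = 1\<^sub>m n \<and> minv A * A = 1\<^sub>m n"
proof -
  have "Determinant.det A \<noteq> (0 :: real)"
    using det_0_iff_vec_prod_zero[OF A] inj by auto
  hence "A \<in> Units (ring_mat TYPE(real) n undefined)"
    by (rule det_non_zero_imp_unit[OF A])
  then obtain B where B: "B \<in> carrier_mat n n" "B * A = 1\<^sub>m n" "A * B = 1\<^sub>m n"
    unfolding Units_def by (auto simp: ring_mat_simps)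
  thus ?thesis using minv_unique[OF A B(1) B(3) B(2)] by simp
qed

lemma inverse_symmetric:
  fixes A B :: "real mat"
  assumes A: "A \<in> carrier_mat n n" and B: "B \<in> carrier_mat n n"
    and AB: "A * B = 1\<^sub>m n" and sym: "A\<^sup>T = A"
  shows "B\<^sup>T = B"
proof -
  have BA: "B * A = 1\<^sub>m n" by (rule mat_mult_left_right_inverse[OF A B AB])
  have "B\<^sup>T * A = (A\<^sup>T * B)\<^sup>T" using transpose_mult[of "A\<^sup>T" n n B n] A B by simp
  also have "\<dots> = 1\<^sub>m n" using AB sym by simp
  finally have BtA: "B\<^sup>T * A = 1\<^sub>m n" .
  have "B\<^sup>T = B\<^sup>T * (A * B)" using AB B by simp
  also have "\<dots> = (B\<^sup>T * A) * B" using assoc_mult_mat[of "B\<^sup>T" n n A n B n] A B by simp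
  also have "\<dots> = B" using BtA B by simp
  finally show ?thesis .
qed

text \<open>The inverse of a positive definite symmetric matrix is positive definite:
  \<open>v \<bullet> B v = w \<bullet> A w\<close> for \<open>w = B v\<close>.\<close>

lemma inverse_pos_def:
  fixes A B :: "real mat"
  assumes A: "A \<in> carrier_mat n n" and B: "B \<in> carrier_mat n n"
    and AB: "A * B = 1\<^sub>m n" and sym: "A\<^sup>T = A"
    and pos: "\<And>w. w \<in> carrier_vec n \<Longrightarrow> w \<noteq> 0\<^sub>v n \<Longrightarrow> w \<bullet> (A *\<^sub>v w) > 0"
    and v: "v \<in> carrier_vec n" and nz: "v \<noteq> 0\<^sub>v n"
  shows "v \<bullet> (B *\<^sub>v v) > 0"
proof -
  define w where "w = B *\<^sub>v v"
  have w: "w \<in> carrier_vec n" unfolding w_def using B v by auto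
  have "A *\<^sub>v w = (A * B) *\<^sub>v v" unfolding w_def using A B v by simp
  hence Aw: "A *\<^sub>v w = v" using AB v by simp
  have "w \<noteq> 0\<^sub>v n" using Aw nz A by auto
  hence "0 < w \<bullet> (A *\<^sub>v w)" using pos w by blast
  also have "w \<bullet> (A *\<^sub>v w) = v \<bullet> w" using Aw comm_scalar_prod[OF w v] by simp
  finally show ?thesis unfolding w_def .
qed

lemma congruence_pos_def:
  fixes A U :: "real mat"
  assumes A: "A \<in> carrier_mat n n" and sym: "A\<^sup>T = A"
    and pos: "\<And>w. w \<in> carrier_vec n \<Longrightarrow> w \<noteq> 0\<^sub>v n \<Longrightarrow> w \<bullet> (A *\<^sub>v w) > 0"
    and U: "U \<in> carrier_mat n m"
    and inj: "\<And>x. x \<in> carrier_vec m \<Longrightarrow> U *\<^sub>v x = 0\<^sub>v n \<Longrightarrow> x = 0\<^sub>v m"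
  shows "pos_def_mat (U\<^sup>T * A * U)"
proof -
  have W: "U\<^sup>T * A * U \<in> carrier_mat m m" using U A by auto
  have "(U\<^sup>T * A * U)\<^sup>T = U\<^sup>T * (U\<^sup>T * A)\<^sup>T"
    using transpose_mult[of "U\<^sup>T * A" m n U m] U A by simp
  also have "(U\<^sup>T * A)\<^sup>T = A * U"
    using transpose_mult[of "U\<^sup>T" m n A n] U A sym by simp
  also have "U\<^sup>T * (A * U) = U\<^sup>T * A * U"
    using assoc_mult_mat[of "U\<^sup>T" m n A n U m] U A by simp
  finally have W_sym: "(U\<^sup>T * A * U)\<^sup>T = U\<^sup>T * A * U" .
  have "x \<bullet> ((U\<^sup>T * A * U) *\<^sub>v x) > 0" if x: "x \<in> carrier_vec m" "x \<noteq> 0\<^sub>v m" for x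
  proof -
    have Ux: "U *\<^sub>v x \<in> carrier_vec n" "U *\<^sub>v x \<noteq> 0\<^sub>v n" using U x inj by auto
    have AUx: "A *\<^sub>v (U *\<^sub>v x) \<in> carrier_vec n" using A Ux by auto
    have "(U\<^sup>T * A * U) *\<^sub>v x = (U\<^sup>T * A) *\<^sub>v (U *\<^sub>v x)"
      using assoc_mult_mat_vec[of "U\<^sup>T * A" m n U m x] U A x by simp
    also have "\<dots> = U\<^sup>T *\<^sub>v (A *\<^sub>v (U *\<^sub>v x))"
      using assoc_mult_mat_vec[of "U\<^sup>T" m n A n "U *\<^sub>v x"] U A Ux by simp
    finally have "(U\<^sup>T * A * U) *\<^sub>v x = U\<^sup>T *\<^sub>v (A *\<^sub>v (U *\<^sub>v x))" .
    hence "x \<bullet> ((U\<^sup>T * A * U) *\<^sub>v x) = (U\<^sup>T *\<^sub>v (A *\<^sub>v (U *\<^sub>v x))) \<bullet> x"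
      using comm_scalar_prod[OF x(1), of "U\<^sup>T *\<^sub>v (A *\<^sub>v (U *\<^sub>v x))"] U AUx by simp
    also have "\<dots> = (A *\<^sub>v (U *\<^sub>v x)) \<bullet> (U *\<^sub>v x)"
      by (rule transpose_vec_mult_scalar[OF U x(1) AUx])
    also have "\<dots> = (U *\<^sub>v x) \<bullet> (A *\<^sub>v (U *\<^sub>v x))" by (rule comm_scalar_prod[OF AUx Ux(1)])
    finally show ?thesis using pos[OF Ux] by simp
  qed
  thus ?thesis unfolding pos_def_mat_def using W W_sym by blast
qed

lemma pos_def_invertible:
  assumes pd: "pos_def_mat W" and W: "W \<in> carrier_mat m m"
  shows "minv W \<in> carrier_mat m m \<and> W * minv W = 1\<^sub>m m \<and> minv W * W = 1\<^sub>m m"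
proof (rule minv_of_injective[OF W])
  fix v assume v: "v \<in> carrier_vec m" and z: "W *\<^sub>v v = 0\<^sub>v m"
  have "\<forall>v \<in> carrier_vec m. v \<noteq> 0\<^sub>v m \<longrightarrow> v \<bullet> (W *\<^sub>v v) > 0"
    using pd W unfolding pos_def_mat_def by auto
  thus "v = 0\<^sub>v m" using v z by force
qed

text \<open>For \<open>c > 0\<close> such a matrix is invertible and all entries of its inverse are bounded by
  \<open>1/c\<close>; this uniform bound is what controls \<open>(S + t P)\<inverse>\<close> for large \<open>t\<close>.\<close>

definition coercive :: "real \<Rightarrow> real mat \<Rightarrow> bool" where
  "coercive c A \<longleftrightarrow> (\<forall>v \<in> carrier_vec (dim_row A). v \<bullet> (A *\<^sub>v v) \<ge> c * (v \<bullet> v))"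

lemma coercive_invertible:
  assumes A: "A \<in> carrier_mat n n" and c: "c > 0" and co: "coercive c A"
  shows "minv A \<in> carrier_mat n n \<and> A * minv A = 1\<^sub>m n \<and> minv A * A = 1\<^sub>m n"
proof (rule minv_of_injective[OF A], rule ccontr)
  fix v assume v: "v \<in> carrier_vec n" and z: "A *\<^sub>v v = 0\<^sub>v n" and nz: "v \<noteq> 0\<^sub>v n"
  have "c * (v \<bullet> v) \<le> v \<bullet> (A *\<^sub>v v)" using co A v unfolding coercive_def by auto
  moreover have "0 < c * (v \<bullet> v)" using c scalar_prod_self_pos[OF v nz] by simp
  ultimately show False using z v by simp
qed

lemma coercive_inverse_entry_bound:
  assumes A: "A \<in> carrier_mat n n" and c: "c > 0" and co: "coercive c A"
    and i: "i < n" and j: "j < n"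
  shows "\<bar>minv A $$ (i,j)\<bar> \<le> 1 / c"
proof -
  have M: "minv A \<in> carrier_mat n n" "A * minv A = 1\<^sub>m n" using coercive_invertible[OF A c co] by auto
  define x where "x = col (minv A) j"
  define T where "T = x \<bullet> x"
  have x: "x \<in> carrier_vec n" unfolding x_def using M j by auto
  have "A *\<^sub>v x = unit_vec n j"
    unfolding x_def using col_mult_mat[OF A M(1) j] M(2) j by simp
  hence "x \<bullet> (A *\<^sub>v x) = x $ j" using j x by simp
  hence cT: "c * T \<le> x $ j" using co A x unfolding coercive_def T_def by auto
  have T: "(x $ k)^2 \<le> T" if "k < n" for k
    unfolding T_def scalar_prod_self[OF x] by (rule member_le_sum) (use that in auto)
  have T0: "0 \<le> T" using T[OF j] by (meson order_trans zero_le_power2)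
  have "c^2 * T^2 \<le> T"
  proof -
    have "(c * T)^2 \<le> (x $ j)^2" using cT c T0 by (intro power_mono) auto
    thus ?thesis using T[OF j] by (simp add: power_mult_distrib)
  qed
  hence "T \<le> (1 / c)^2"
    using c T0 by (cases "T = 0") (auto simp: power2_eq_square field_simps)
  hence "\<bar>x $ i\<bar>^2 \<le> (1 / c)^2" using T[OF i] by simp
  hence "\<bar>x $ i\<bar> \<le> 1 / c" by (rule power2_le_imp_le) (use c in simp)
  thus ?thesis unfolding x_def using M i j by simp
qed

text \<open>Gram matrices of injective matrices are injective: \<open>K\<^sup>T K c = 0\<close> forces \<open>|K c|\<^sup>2 = 0\<close>.\<close>

lemma gram_injective:
  fixes K :: "real mat"
  assumes K: "K \<in> carrier_mat n r"
    and inj: "\<And>c. c \<in> carrier_vec r \<Longrightarrow> K *\<^sub>v c = 0\<^sub>v n \<Longrightarrow> c = 0\<^sub>v r"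
    and c: "c \<in> carrier_vec r" and z: "K\<^sup>T *\<^sub>v (K *\<^sub>v c) = 0\<^sub>v r"
  shows "c = 0\<^sub>v r"
proof -
  have Kc: "K *\<^sub>v c \<in> carrier_vec n" using K c by auto
  have "(K *\<^sub>v c) \<bullet> (K *\<^sub>v c) = (K\<^sup>T *\<^sub>v (K *\<^sub>v c)) \<bullet> c"
    using transpose_vec_mult_scalar[OF K c Kc] by simp
  also have "\<dots> = 0" using z c by simp
  finally have "K *\<^sub>v c = 0\<^sub>v n" using scalar_prod_self_pos[OF Kc] by fastforce
  thus ?thesis using inj c by blast
qed

lemma gram_cancel:
  fixes K Z :: "real mat"
  assumes K: "K \<in> carrier_mat n r"
    and inj: "\<And>c. c \<in> carrier_vec r \<Longrightarrow> K *\<^sub>v c = 0\<^sub>v n \<Longrightarrow> c = 0\<^sub>v r"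
    and Z: "Z \<in> carrier_mat r m" and KKZ: "(K\<^sup>T * K) * Z = 0\<^sub>m r m"
  shows "Z = 0\<^sub>m r m"
proof -
  have "col Z j = 0\<^sub>v r" if j: "j < m" for j
  proof (rule gram_injective[OF K inj])
    show "col Z j \<in> carrier_vec r" using Z j by auto
    have "K\<^sup>T *\<^sub>v (K *\<^sub>v col Z j) = (K\<^sup>T * K) *\<^sub>v col Z j"
      using K Z j by (simp add: assoc_mult_mat_vec[of _ r n _ r])
    also have "\<dots> = col ((K\<^sup>T * K) * Z) j" using col_mult_mat[of "K\<^sup>T * K" r r Z m j] K Z j by simp
    finally show "K\<^sup>T *\<^sub>v (K *\<^sub>v col Z j) = 0\<^sub>v r" using KKZ j by simp
  qed
  thus ?thesis by (intro mat_col_eqI) (use Z in auto)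
qed

text \<open>Let \<open>P\<close> be positive semidefinite and suppose the columns of \<open>K\<close> span its kernel, in the
  sense that \<open>v\<^sup>T P v = 0\<close> and \<open>K\<^sup>T v = 0\<close> force \<open>v = 0\<close>. Then \<open>P + K K\<^sup>T\<close> has trivial
  kernel, since its quadratic form is \<open>v\<^sup>T P v + |K\<^sup>T v|\<^sup>2\<close>.\<close>

lemma augmented_injective:
  fixes P K :: "real mat"
  assumes P: "P \<in> carrier_mat n n" and K: "K \<in> carrier_mat n r"
    and psd: "\<And>v. v \<in> carrier_vec n \<Longrightarrow> v \<bullet> (P *\<^sub>v v) \<ge> 0"
    and kernel: "\<And>v. v \<in> carrier_vec n \<Longrightarrow> v \<bullet> (P *\<^sub>v v) = 0 \<Longrightarrow> K\<^sup>T *\<^sub>v v = 0\<^sub>v r \<Longrightarrow> v = 0\<^sub>v n"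
    and v: "v \<in> carrier_vec n" and Hv: "(P + K * K\<^sup>T) *\<^sub>v v = 0\<^sub>v n"
  shows "v = 0\<^sub>v n"
proof -
  define z where "z = K\<^sup>T *\<^sub>v v"
  have z: "z \<in> carrier_vec r" unfolding z_def using K v by auto
  have "(P + K * K\<^sup>T) *\<^sub>v v = P *\<^sub>v v + K *\<^sub>v z"
    unfolding z_def using P K v
    by (simp add: add_mult_distrib_mat_vec[of _ n n] assoc_mult_mat_vec[of _ n r _ n])
  hence "v \<bullet> ((P + K * K\<^sup>T) *\<^sub>v v) = v \<bullet> (P *\<^sub>v v) + v \<bullet> (K *\<^sub>v z)"
    using v P K z scalar_prod_add_distrib[of v n "P *\<^sub>v v" "K *\<^sub>v z"] by simp
  moreover have "v \<bullet> ((P + K * K\<^sup>T) *\<^sub>v v) = 0" using Hv v by simp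
  moreover have "v \<bullet> (K *\<^sub>v z) = z \<bullet> z"
    using transpose_vec_mult_scalar[OF K z v] unfolding z_def by simp
  moreover have "z \<bullet> z \<ge> 0" unfolding scalar_prod_self[OF z] by (simp add: sum_nonneg)
  ultimately have "v \<bullet> (P *\<^sub>v v) = 0" and "z \<bullet> z = 0" using psd[OF v] by linarith+
  moreover from \<open>z \<bullet> z = 0\<close> have "z = 0\<^sub>v r" using scalar_prod_self_pos[OF z] by fastforce
  ultimately show "v = 0\<^sub>v n" using kernel[OF v] unfolding z_def by blast
qed

text \<open>The witness is \<open>Y = (P + K K\<^sup>T)\<inverse> U\<close>: from \<open>K\<^sup>T P = 0\<close> one gets \<open>K\<^sup>T K (K\<^sup>T Y) = K\<^sup>T U = 0\<close>,
  so \<open>K\<^sup>T Y = 0\<close> and \<open>P Y = U\<close>.\<close>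

lemma range_of_semidefinite:
  fixes P K U :: "real mat"
  assumes P: "P \<in> carrier_mat n n" and sym: "P\<^sup>T = P"
    and psd: "\<And>v. v \<in> carrier_vec n \<Longrightarrow> v \<bullet> (P *\<^sub>v v) \<ge> 0"
    and K: "K \<in> carrier_mat n r" and PK: "P * K = 0\<^sub>m n r"
    and K_inj: "\<And>c. c \<in> carrier_vec r \<Longrightarrow> K *\<^sub>v c = 0\<^sub>v n \<Longrightarrow> c = 0\<^sub>v r"
    and kernel: "\<And>v. v \<in> carrier_vec n \<Longrightarrow> v \<bullet> (P *\<^sub>v v) = 0 \<Longrightarrow> K\<^sup>T *\<^sub>v v = 0\<^sub>v r \<Longrightarrow> v = 0\<^sub>v n"
    and U: "U \<in> carrier_mat n m" and KU: "K\<^sup>T * U = 0\<^sub>m r m"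
  shows "\<exists>Y \<in> carrier_mat n m. P * Y = U"
proof -
  define H where "H = P + K * K\<^sup>T"
  have Kt: "K\<^sup>T \<in> carrier_mat r n" using K by auto
  have H: "H \<in> carrier_mat n n" unfolding H_def using P K by auto
  have Hi: "minv H \<in> carrier_mat n n" "H * minv H = 1\<^sub>m n"
    using minv_of_injective[OF H] augmented_injective[OF P K psd kernel] unfolding H_def by blast+
  define Y where "Y = minv H * U"
  have Y: "Y \<in> carrier_mat n m" unfolding Y_def using Hi U by auto
  have HY: "H * Y = U"
    unfolding Y_def using assoc_mult_mat[OF H Hi(1) U, symmetric] Hi(2) U by simp
  have "K\<^sup>T * P = (P * K)\<^sup>T" using transpose_mult[OF P K] sym by simp
  hence KtP: "K\<^sup>T * P = 0\<^sub>m r n" using PK by simp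
  have KtH: "K\<^sup>T * H = (K\<^sup>T * K) * K\<^sup>T"
    unfolding H_def using K P KtP
    by (simp add: mult_add_distrib_mat[of _ r n] assoc_mult_mat[of _ r n _ r _ n])
  have "(K\<^sup>T * K) * (K\<^sup>T * Y) = (K\<^sup>T * H) * Y"
    unfolding KtH using assoc_mult_mat[of "K\<^sup>T * K" r r "K\<^sup>T" n Y m] K Y by simp
  also have "\<dots> = K\<^sup>T * U" using assoc_mult_mat[OF Kt H Y] HY by simp
  finally have "K\<^sup>T * Y = 0\<^sub>m r m"
    using gram_cancel[OF K K_inj, of "K\<^sup>T * Y" m] KU Kt Y by auto
  moreover have "U = P * Y + K * (K\<^sup>T * Y)"
    unfolding HY[symmetric] H_def using P K Y
    by (simp add: add_mult_distrib_mat[of _ n n] assoc_mult_mat[of K n r _ n _ m])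
  ultimately show ?thesis using P K Y by auto
qed

lemma annihilator_transfer:
  fixes P U N :: "real mat"
  assumes P: "P \<in> carrier_mat n n" and U: "U \<in> carrier_mat n m" and N: "N \<in> carrier_mat n c"
    and ker: "\<And>v. v \<in> carrier_vec n \<Longrightarrow> U\<^sup>T *\<^sub>v v = 0\<^sub>v m \<Longrightarrow> P *\<^sub>v v = 0\<^sub>v n"
    and UtN: "U\<^sup>T * N = 0\<^sub>m m c"
  shows "P * N = 0\<^sub>m n c"
proof -
  have "col (P * N) j = 0\<^sub>v n" if j: "j < c" for j
  proof -
    have "U\<^sup>T *\<^sub>v col N j = col (U\<^sup>T * N) j" using col_mult_mat[of "U\<^sup>T" m n N c j] U N j by simp
    hence "P *\<^sub>v col N j = 0\<^sub>v n" using ker[of "col N j"] UtN N j by simp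
    thus ?thesis using col_mult_mat[OF P N j] by simp
  qed
  thus ?thesis by (intro mat_col_eqI) (use P N in auto)
qed

text \<open>With \<open>W = U\<^sup>T S\<inverse> U\<close> and \<open>G = W\<inverse> U\<^sup>T S\<inverse>\<close>, the matrix \<open>N = S\<inverse> - S\<inverse> U G\<close> satisfies
  \<open>U\<^sup>T N = U\<^sup>T S\<inverse> - W W\<inverse> U\<^sup>T S\<inverse> = 0\<close>.\<close>

lemma correction_orthogonal:
  fixes U Si Wi :: "real mat"
  assumes U: "U \<in> carrier_mat n m" and Si: "Si \<in> carrier_mat n n"
    and Wi: "Wi \<in> carrier_mat m m" "(U\<^sup>T * Si * U) * Wi = 1\<^sub>m m"
  shows "U\<^sup>T * (Si - (Si * U) * (Wi * (U\<^sup>T * Si))) = 0\<^sub>m m n"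
proof -
  define G where "G = Wi * (U\<^sup>T * Si)"
  have UtSi: "U\<^sup>T * Si \<in> carrier_mat m n" using U Si by auto
  have G: "G \<in> carrier_mat m n" unfolding G_def using Wi UtSi by auto
  have "U\<^sup>T * ((Si * U) * G) = (U\<^sup>T * Si * U) * G"
    using assoc_mult_mat[of "U\<^sup>T" m n "Si * U" m G n] assoc_mult_mat[of "U\<^sup>T" m n Si n U m] Si U G
    by simp
  also have "\<dots> = ((U\<^sup>T * Si * U) * Wi) * (U\<^sup>T * Si)"
    unfolding G_def using assoc_mult_mat[of "U\<^sup>T * Si * U" m m Wi m "U\<^sup>T * Si" n] Si U Wi by simp
  also have "\<dots> = U\<^sup>T * Si" using Wi(2) left_mult_one_mat[OF UtSi] by simp
  finally have "U\<^sup>T * (Si - (Si * U) * G) = U\<^sup>T * Si - U\<^sup>T * Si"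
    using mult_minus_distrib_mat[of "U\<^sup>T" m n Si n "(Si * U) * G"] Si U G by simp
  thus ?thesis unfolding G_def using UtSi by simp
qed

text \<open>By the previous two lemmas \<open>P N = 0\<close>, so \<open>(S + t P) N = S N =
  1 - U G\<close> for every \<open>t\<close>. Multiplying by a left inverse \<open>M\<close> of \<open>S + t P\<close> gives
  \<open>N = M - (M U) G\<close>.\<close>

lemma correction_identity:
  fixes S P U Si Wi M :: "real mat"
  assumes S: "S \<in> carrier_mat n n" and P: "P \<in> carrier_mat n n" and U: "U \<in> carrier_mat n m"
    and Si: "Si \<in> carrier_mat n n" "S * Si = 1\<^sub>m n"
    and Wi: "Wi \<in> carrier_mat m m" "(U\<^sup>T * Si * U) * Wi = 1\<^sub>m m"
    and ker: "\<And>v. v \<in> carrier_vec n \<Longrightarrow> U\<^sup>T *\<^sub>v v = 0\<^sub>v m \<Longrightarrow> P *\<^sub>v v = 0\<^sub>v n"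
    and M: "M \<in> carrier_mat n n" "M * (S + t \<cdot>\<^sub>m P) = 1\<^sub>m n"
  shows "Si - Si * U * Wi * U\<^sup>T * Si = M - (M * U) * (Wi * (U\<^sup>T * Si))"
proof -
  define G where "G = Wi * (U\<^sup>T * Si)"
  define N where "N = Si - (Si * U) * G"
  have G: "G \<in> carrier_mat m n" unfolding G_def using Wi U Si by auto
  have N: "N \<in> carrier_mat n n" unfolding N_def using Si U G by auto
  have N_alt: "Si - Si * U * Wi * U\<^sup>T * Si = N"
  proof -
    have "Si * U * Wi * U\<^sup>T * Si = (Si * U * Wi) * (U\<^sup>T * Si)"
      using assoc_mult_mat[of "Si * U * Wi" n m "U\<^sup>T" n Si n] Si U Wi by simp
    also have "\<dots> = (Si * U) * G"
      unfolding G_def using assoc_mult_mat[of "Si * U" n m Wi m "U\<^sup>T * Si" n] Si U Wi by simp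
    finally show ?thesis unfolding N_def by simp
  qed
  have PN: "P * N = 0\<^sub>m n n"
    using annihilator_transfer[OF P U N ker] correction_orthogonal[OF U Si(1) Wi]
    unfolding N_def G_def by blast
  have "S * ((Si * U) * G) = (S * Si) * (U * G)"
    using assoc_mult_mat[of S n n "Si * U" m G n] assoc_mult_mat[of S n n Si n U m]
      assoc_mult_mat[of "S * Si" n n U m G n] S Si U G by simp
  hence "S * N = 1\<^sub>m n - U * G"
    unfolding N_def using mult_minus_distrib_mat[of S n n Si n "(Si * U) * G"] S Si U G by simp
  moreover have "(S + t \<cdot>\<^sub>m P) * N = S * N + t \<cdot>\<^sub>m (P * N)"
    using add_mult_distrib_mat[of S n n "t \<cdot>\<^sub>m P" N n] mult_smult_assoc_mat[OF P N] S P N by simp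
  ultimately have "(S + t \<cdot>\<^sub>m P) * N = 1\<^sub>m n - U * G"
    using PN U G minus_carrier_mat[of "U * G" n n "1\<^sub>m n"] by simp
  hence "M * ((S + t \<cdot>\<^sub>m P) * N) = M - (M * U) * G"
    using mult_minus_distrib_mat[of M n n "1\<^sub>m n" n "U * G"] assoc_mult_mat[of M n n U m G n] M U G
    by simp
  moreover have "M * ((S + t \<cdot>\<^sub>m P) * N) = N"
    using assoc_mult_mat[of M n n "S + t \<cdot>\<^sub>m P" n N n] M S P N by simp
  ultimately show ?thesis unfolding N_alt G_def by simp
qed

lemma mult_mat_entry_bound:
  fixes A B :: "real mat"
  assumes A: "A \<in> carrier_mat nr nk" and B: "B \<in> carrier_mat nk nc" and i: "i < nr" and j: "j < nc"
    and a: "\<And>l. l < nk \<Longrightarrow> \<bar>A $$ (i,l)\<bar> \<le> a l"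
  shows "\<bar>(A * B) $$ (i,j)\<bar> \<le> (\<Sum>l<nk. a l * \<bar>B $$ (l,j)\<bar>)"
proof -
  have "\<bar>(A * B) $$ (i,j)\<bar> \<le> (\<Sum>l<nk. \<bar>A $$ (i,l) * B $$ (l,j)\<bar>)"
    unfolding mult_mat_entry[OF A B i j] by (rule sum_abs)
  also have "\<dots> \<le> (\<Sum>l<nk. a l * \<bar>B $$ (l,j)\<bar>)"
    by (intro sum_mono) (auto simp: abs_mult intro: mult_right_mono a)
  finally show ?thesis .
qed

text \<open>For a left inverse \<open>M\<close> of \<open>S + t P\<close> one has \<open>t M P = 1 - M S\<close>, hence
  \<open>t M (P Y) = Y - M S Y\<close>.\<close>

lemma left_inverse_on_range:
  fixes S P Y M :: "real mat"
  assumes S: "S \<in> carrier_mat n n" and P: "P \<in> carrier_mat n n" and Y: "Y \<in> carrier_mat n m"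
    and M: "M \<in> carrier_mat n n" "M * (S + t \<cdot>\<^sub>m P) = 1\<^sub>m n"
    and i: "i < n" and k: "k < m"
  shows "t * (M * (P * Y)) $$ (i,k) = Y $$ (i,k) - ((M * S) * Y) $$ (i,k)"
proof -
  have "M * (S + t \<cdot>\<^sub>m P) = M * S + t \<cdot>\<^sub>m (M * P)"
    using mult_add_distrib_mat[of M n n S n "t \<cdot>\<^sub>m P"] mult_smult_distrib[of M n n P n t] M S P by simp
  hence sum_one: "M * S + t \<cdot>\<^sub>m (M * P) = 1\<^sub>m n" using M by simp
  have MP: "t * (M * P) $$ (i,l) = (if i = l then 1 else 0) - (M * S) $$ (i,l)" if l: "l < n" for l
  proof -
    have "(M * S + t \<cdot>\<^sub>m (M * P)) $$ (i,l) = (M * S) $$ (i,l) + t * (M * P) $$ (i,l)"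
      using M S P i l by simp
    thus ?thesis using sum_one i l by simp
  qed
  have "t * (M * (P * Y)) $$ (i,k) = (\<Sum>l<n. t * (M * P) $$ (i,l) * Y $$ (l,k))"
    using assoc_mult_mat[of M n n P n Y m] mult_mat_entry[of "M * P" n n Y m i k] M P Y i k
    by (simp add: sum_distrib_left mult.assoc)
  also have "\<dots> = (\<Sum>l<n. (if i = l then Y $$ (l,k) else 0) - (M * S) $$ (i,l) * Y $$ (l,k))"
    by (intro sum.cong) (auto simp: MP left_diff_distrib)
  also have "\<dots> = Y $$ (i,k) - ((M * S) * Y) $$ (i,k)"
    using mult_mat_entry[of "M * S" n n Y m i k] M S Y i k by (simp add: sum_subtractf)
  finally show ?thesis .
qed

text \<open>If \<open>M t\<close> is a left inverse of \<open>S + t P\<close> with uniformly bounded entries, then \<open>M t\<close>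
  annihilates the range of \<open>P\<close> in the limit: \<open>M t (P Y) = (Y - M t S Y) / t = O(1/t)\<close>.\<close>

lemma inverse_vanishes_on_range:
  fixes S P Y :: "real mat" and M :: "real \<Rightarrow> real mat"
  assumes S: "S \<in> carrier_mat n n" and P: "P \<in> carrier_mat n n" and Y: "Y \<in> carrier_mat n m"
    and M: "\<And>t. t \<ge> 0 \<Longrightarrow> M t \<in> carrier_mat n n \<and> M t * (S + t \<cdot>\<^sub>m P) = 1\<^sub>m n"
    and bound: "\<And>t i j. t \<ge> 0 \<Longrightarrow> i < n \<Longrightarrow> j < n \<Longrightarrow> \<bar>M t $$ (i,j)\<bar> \<le> B"
    and i: "i < n" and k: "k < m"
  shows "((\<lambda>t. (M t * (P * Y)) $$ (i,k)) \<longlongrightarrow> 0) at_top"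
proof -
  define C where "C = \<bar>Y $$ (i,k)\<bar> + (\<Sum>l<n. (\<Sum>q<n. B * \<bar>S $$ (q,l)\<bar>) * \<bar>Y $$ (l,k)\<bar>)"
  have decay: "\<bar>(M t * (P * Y)) $$ (i,k)\<bar> \<le> C / t" if t: "t > 0" for t
  proof -
    have Mt: "M t \<in> carrier_mat n n" "M t * (S + t \<cdot>\<^sub>m P) = 1\<^sub>m n" using M t by auto
    have "\<bar>((M t * S) * Y) $$ (i,k)\<bar> \<le> (\<Sum>l<n. (\<Sum>q<n. B * \<bar>S $$ (q,l)\<bar>) * \<bar>Y $$ (l,k)\<bar>)"
    proof (rule mult_mat_entry_bound[of _ n n _ m])
      fix l assume l: "l < n"
      show "\<bar>(M t * S) $$ (i,l)\<bar> \<le> (\<Sum>q<n. B * \<bar>S $$ (q,l)\<bar>)"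
        by (rule mult_mat_entry_bound[OF Mt(1) S i l]) (use bound t i in auto)
    qed (use Mt S Y i k in auto)
    hence "\<bar>t * (M t * (P * Y)) $$ (i,k)\<bar> \<le> C"
      unfolding C_def left_inverse_on_range[OF S P Y Mt i k] by linarith
    thus ?thesis using t by (simp add: abs_mult field_simps)
  qed
  have "\<forall>\<^sub>F t in at_top. norm ((M t * (P * Y)) $$ (i,k)) \<le> C / t"
    using eventually_gt_at_top[of "0::real"] by eventually_elim (simp add: decay)
  moreover have "((\<lambda>t. C / t) \<longlongrightarrow> 0) at_top"
    by (rule tendsto_divide_0[OF tendsto_const filterlim_at_top_imp_at_infinity[OF filterlim_ident]])
  ultimately show ?thesis by (rule Lim_null_comparison)
qed

lemma regularized_inverse_limit:
  fixes S P U Si Wi Y :: "real mat" and M :: "real \<Rightarrow> real mat"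
  assumes S: "S \<in> carrier_mat n n" and P: "P \<in> carrier_mat n n" and U: "U \<in> carrier_mat n m"
    and Si: "Si \<in> carrier_mat n n" "S * Si = 1\<^sub>m n"
    and Wi: "Wi \<in> carrier_mat m m" "(U\<^sup>T * Si * U) * Wi = 1\<^sub>m m"
    and ker: "\<And>v. v \<in> carrier_vec n \<Longrightarrow> U\<^sup>T *\<^sub>v v = 0\<^sub>v m \<Longrightarrow> P *\<^sub>v v = 0\<^sub>v n"
    and Y: "Y \<in> carrier_mat n m" "P * Y = U"
    and M: "\<And>t. t \<ge> 0 \<Longrightarrow> M t \<in> carrier_mat n n \<and> M t * (S + t \<cdot>\<^sub>m P) = 1\<^sub>m n"
    and bound: "\<And>t i j. t \<ge> 0 \<Longrightarrow> i < n \<Longrightarrow> j < n \<Longrightarrow> \<bar>M t $$ (i,j)\<bar> \<le> B"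
    and i: "i < n" and j: "j < n"
  shows "((\<lambda>t. M t $$ (i,j)) \<longlongrightarrow> (Si - Si * U * Wi * U\<^sup>T * Si) $$ (i,j)) at_top"
proof -
  define G where "G = Wi * (U\<^sup>T * Si)"
  define N where "N = Si - Si * U * Wi * U\<^sup>T * Si"
  have G: "G \<in> carrier_mat m n" unfolding G_def using Wi U Si by auto
  have split: "N $$ (i,j) + (\<Sum>k<m. (M t * U) $$ (i,k) * G $$ (k,j)) = M t $$ (i,j)"
    if t: "t \<ge> 0" for t
  proof -
    have Mt: "M t \<in> carrier_mat n n" "M t * (S + t \<cdot>\<^sub>m P) = 1\<^sub>m n" using M t by auto
    have "N = M t - (M t * U) * G"
      unfolding N_def G_def by (rule correction_identity[OF S P U Si Wi ker Mt])
    thus ?thesis using Mt U G i j mult_mat_entry[of "M t * U" n m G n i j] by simp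
  qed
  have ev: "\<forall>\<^sub>F t in at_top. N $$ (i,j) + (\<Sum>k<m. (M t * U) $$ (i,k) * G $$ (k,j)) = M t $$ (i,j)"
    using eventually_ge_at_top[of "0::real"] by eventually_elim (rule split)
  have "((\<lambda>t. (M t * U) $$ (i,k)) \<longlongrightarrow> 0) at_top" if "k < m" for k
    using inverse_vanishes_on_range[OF S P Y(1) M bound i that] Y(2) by simp
  hence "((\<lambda>t. N $$ (i,j) + (\<Sum>k<m. (M t * U) $$ (i,k) * G $$ (k,j))) \<longlongrightarrow>
      N $$ (i,j) + (\<Sum>k<m. 0 * G $$ (k,j))) at_top"
    by (intro tendsto_intros) auto
  thus ?thesis using tendsto_cong[OF ev] unfolding N_def by simp
qed

lemma Smat_carrier: "Smat n \<alpha> l \<in> carrier_mat n n"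
  unfolding Smat_def by auto

lemma Smat_symmetric: "(Smat n \<alpha> l)\<^sup>T = Smat n \<alpha> l"
  unfolding Smat_def by (rule eq_matI) auto

lemma Smat_form:
  assumes v: "v \<in> carrier_vec n"
  shows "v \<bullet> (Smat n \<alpha> l *\<^sub>v v) = \<alpha> * (v \<bullet> v) + l * (\<Sum>i<n. v $ i)^2"
proof -
  have "v \<bullet> (Smat n \<alpha> l *\<^sub>v v) =
      (\<Sum>i<n. \<Sum>j<n. (if i = j then \<alpha> * (v $ i * v $ j) else 0) + l * (v $ i * v $ j))"
    unfolding quadratic_form_sum[OF Smat_carrier v] by (intro sum.cong refl) (auto simp: Smat_def algebra_simps)
  also have "\<dots> = (\<Sum>i<n. \<alpha> * (v $ i * v $ i)) + (\<Sum>i<n. \<Sum>j<n. l * (v $ i * v $ j))"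
    by (simp add: sum.distrib)
  also have "(\<Sum>i<n. \<Sum>j<n. l * (v $ i * v $ j)) = l * ((\<Sum>i<n. v $ i) * (\<Sum>j<n. v $ j))"
  proof -
    have "(\<Sum>j<n. l * (v $ i * v $ j)) = (l * v $ i) * (\<Sum>j<n. v $ j)" for i
      by (simp add: sum_distrib_left mult.assoc)
    hence "(\<Sum>i<n. \<Sum>j<n. l * (v $ i * v $ j)) = (\<Sum>i<n. (l * v $ i) * (\<Sum>j<n. v $ j))"
      by simp
    also have "\<dots> = (\<Sum>i<n. l * v $ i) * (\<Sum>j<n. v $ j)" by (rule sum_distrib_right[symmetric])
    also have "(\<Sum>i<n. l * v $ i) = l * (\<Sum>i<n. v $ i)" by (rule sum_distrib_left[symmetric])
    finally show ?thesis by simp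
  qed
  finally show ?thesis
    unfolding scalar_prod_self[OF v] by (simp add: power2_eq_square sum_distrib_left)
qed

locale signless_laplacian_graph =
  fixes n :: nat and P :: "real mat"
  assumes SL: "signless_laplacian n P"
begin

lemma P_carrier: "P \<in> carrier_mat n n"
  using SL unfolding signless_laplacian_def by auto

lemma P_transpose: "P\<^sup>T = P"
  using SL unfolding signless_laplacian_def by auto

lemma P_sym: "i < n \<Longrightarrow> j < n \<Longrightarrow> P $$ (j,i) = P $$ (i,j)"
  using arg_cong[OF P_transpose, of "\<lambda>A. A $$ (i,j)"] P_carrier by auto

lemma P_offdiag: "i < n \<Longrightarrow> j < n \<Longrightarrow> i \<noteq> j \<Longrightarrow> P $$ (i,j) = 0 \<or> P $$ (i,j) = 1"
  using SL unfolding signless_laplacian_def by auto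

lemma P_nonneg:
  assumes "i < n" "j < n"
  shows "P $$ (i,j) \<ge> 0"
proof (cases "i = j")
  case True
  thus ?thesis using SL assms unfolding signless_laplacian_def by auto
next
  case False
  thus ?thesis using P_offdiag[OF assms False] by auto
qed

lemma Delta_eq: "i < n \<Longrightarrow> Delta P i = P $$ (i,i) - (\<Sum>j\<in>{..<n} - {i}. P $$ (i,j))"
  unfolding Delta_def using P_carrier P_nonneg by (auto simp: atLeast0LessThan intro!: sum.cong)

lemma Delta_nonneg: "i < n \<Longrightarrow> Delta P i \<ge> 0"
  using SL unfolding signless_laplacian_def by force

lemma gedge_sym: "gedge P i j \<Longrightarrow> gedge P j i"
  unfolding gedge_def using P_carrier P_sym by auto

lemma gedge_iff: "i < n \<Longrightarrow> j < n \<Longrightarrow> i \<noteq> j \<Longrightarrow> gedge P i j \<longleftrightarrow> P $$ (i,j) \<noteq> 0"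
  unfolding gedge_def using P_carrier P_offdiag by auto

lemma gloop_iff: "i < n \<Longrightarrow> gloop P i \<longleftrightarrow> Delta P i \<noteq> 0"
  unfolding gloop_def using P_carrier SL unfolding signless_laplacian_def by auto

definition form :: "(nat \<Rightarrow> real) \<Rightarrow> real" where
  "form f = (\<Sum>i<n. \<Sum>j<n. P $$ (i,j) * f i * f j)"

definition loop_part :: "(nat \<Rightarrow> real) \<Rightarrow> real" where
  "loop_part f = (\<Sum>i<n. Delta P i * (f i)^2)"

definition edge_part :: "(nat \<Rightarrow> real) \<Rightarrow> nat \<Rightarrow> real" where
  "edge_part f i = (\<Sum>j\<in>{..<n} - {i}. P $$ (i,j) * (f i + f j)^2)"

lemma form_decomposition: "form f = loop_part f + (\<Sum>i<n. edge_part f i) / 2"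
proof -
  define rs where "rs i = (\<Sum>j<n. P $$ (i,j))" for i
  have Delta_rs: "Delta P i = 2 * P $$ (i,i) - rs i" if "i < n" for i
    using Delta_eq[OF that] that unfolding rs_def by (simp add: sum.remove)
  have edge: "edge_part f i = (\<Sum>j<n. P $$ (i,j) * (f i + f j)^2) - 4 * P $$ (i,i) * (f i)^2"
    if "i < n" for i
    unfolding edge_part_def using that by (simp add: sum_diff1 power2_eq_square algebra_simps)
  have left: "(\<Sum>i<n. \<Sum>j<n. P $$ (i,j) * (f i)^2) = (\<Sum>i<n. rs i * (f i)^2)"
    unfolding rs_def by (simp add: sum_distrib_right)
  have right: "(\<Sum>i<n. \<Sum>j<n. P $$ (i,j) * (f j)^2) = (\<Sum>i<n. rs i * (f i)^2)"
  proof -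
    have "(\<Sum>i<n. \<Sum>j<n. P $$ (i,j) * (f j)^2) = (\<Sum>j<n. \<Sum>i<n. P $$ (j,i) * (f j)^2)"
      by (subst sum.swap) (intro sum.cong refl, simp add: P_sym)
    thus ?thesis unfolding rs_def by (simp add: sum_distrib_right)
  qed
  have "(\<Sum>i<n. \<Sum>j<n. P $$ (i,j) * (f i + f j)^2) =
      (\<Sum>i<n. \<Sum>j<n. P $$ (i,j) * (f i)^2) + 2 * form f + (\<Sum>i<n. \<Sum>j<n. P $$ (i,j) * (f j)^2)"
    unfolding form_def by (simp add: sum.distrib sum_distrib_left power2_eq_square algebra_simps)
  hence total: "(\<Sum>i<n. \<Sum>j<n. P $$ (i,j) * (f i + f j)^2) = 2 * (\<Sum>i<n. rs i * (f i)^2) + 2 * form f"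
    using left right by simp
  have "(\<Sum>i<n. edge_part f i) = (\<Sum>i<n. \<Sum>j<n. P $$ (i,j) * (f i + f j)^2) - 2 * (\<Sum>i<n. 2 * P $$ (i,i) * (f i)^2)"
    by (simp add: edge sum_subtractf sum_distrib_left mult.assoc)
  moreover have "loop_part f = (\<Sum>i<n. 2 * P $$ (i,i) * (f i)^2) - (\<Sum>i<n. rs i * (f i)^2)"
    unfolding loop_part_def by (simp add: Delta_rs sum_subtractf algebra_simps)
  ultimately show ?thesis using total by linarith
qed

lemma loop_part_nonneg: "loop_part f \<ge> 0"
  unfolding loop_part_def by (intro sum_nonneg mult_nonneg_nonneg Delta_nonneg) auto

lemma edge_part_nonneg: "i < n \<Longrightarrow> edge_part f i \<ge> 0"
  unfolding edge_part_def by (intro sum_nonneg mult_nonneg_nonneg P_nonneg) auto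

lemma form_nonneg: "form f \<ge> 0"
proof -
  have "(\<Sum>i<n. edge_part f i) \<ge> 0" by (intro sum_nonneg edge_part_nonneg) simp
  thus ?thesis unfolding form_decomposition using loop_part_nonneg[of f] by simp
qed

lemma form_vec: "v \<in> carrier_vec n \<Longrightarrow> v \<bullet> (P *\<^sub>v v) = form (\<lambda>i. v $ i)"
  unfolding form_def by (rule quadratic_form_sum[OF P_carrier])

text \<open>A vertex function is alternating if it vanishes at self-loops and changes sign along
  every edge. These are exactly the functions in the kernel of \<open>P\<close>.\<close>

definition alternating :: "(nat \<Rightarrow> real) \<Rightarrow> bool" where
  "alternating f \<longleftrightarrow> (\<forall>i. gloop P i \<longrightarrow> f i = 0) \<and> (\<forall>i j. gedge P i j \<longrightarrow> f j = - f i)"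

lemma form_zero_alternating:
  assumes "form f = 0"
  shows "alternating f"
proof -
  have "loop_part f = 0" and edges: "(\<Sum>i<n. edge_part f i) = 0"
    using assms loop_part_nonneg[of f] sum_nonneg[of "{..<n}" "edge_part f"] edge_part_nonneg
    unfolding form_decomposition by force+
  hence loops: "Delta P i * (f i)^2 = 0" if "i < n" for i
    using that sum_nonneg_eq_0_iff[of "{..<n}" "\<lambda>i. Delta P i * (f i)^2"] Delta_nonneg
    unfolding loop_part_def by simp
  have "edge_part f i = 0" if "i < n" for i
    using that edges sum_nonneg_eq_0_iff[of "{..<n}" "edge_part f"] edge_part_nonneg by simp
  hence edge_terms: "P $$ (i,j) * (f i + f j)^2 = 0" if "i < n" "j < n" "i \<noteq> j" for i j
    using that sum_nonneg_eq_0_iff[of "{..<n} - {i}" "\<lambda>j. P $$ (i,j) * (f i + f j)^2"] P_nonneg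
    unfolding edge_part_def by simp
  show ?thesis
    unfolding alternating_def
  proof (intro conjI allI impI)
    fix i assume loop: "gloop P i"
    hence "i < n" using P_carrier unfolding gloop_def by simp
    thus "f i = 0" using loops[of i] gloop_iff[of i] loop by simp
  next
    fix i j assume e: "gedge P i j"
    hence "i < n" "j < n" "i \<noteq> j" "P $$ (i,j) \<noteq> 0" using P_carrier unfolding gedge_def by auto
    thus "f j = - f i" using edge_terms by fastforce
  qed
qed

text \<open>Conversely, alternating functions lie in the kernel: the row sum
  \<open>(P f)\<^sub>i = P\<^sub>i\<^sub>i f\<^sub>i - \<Sum>j \<noteq> i. P\<^sub>i\<^sub>j f\<^sub>i = \<Delta>\<^sub>i f\<^sub>i\<close> vanishes since \<open>f\<^sub>i = 0\<close> at loops.\<close>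

lemma alternating_kernel:
  assumes alt: "alternating f" and i: "i < n"
  shows "(\<Sum>j<n. P $$ (i,j) * f j) = 0"
proof -
  have "P $$ (i,j) * f j = - (P $$ (i,j) * f i)" if "j \<in> {..<n} - {i}" for j
    using that alt gedge_iff[OF i, of j] unfolding alternating_def by (cases "P $$ (i,j) = 0") auto
  hence "(\<Sum>j\<in>{..<n} - {i}. P $$ (i,j) * f j) = - ((\<Sum>j\<in>{..<n} - {i}. P $$ (i,j)) * f i)"
    by (simp add: sum_negf sum_distrib_right)
  moreover have "(\<Sum>j<n. P $$ (i,j) * f j) = P $$ (i,i) * f i + (\<Sum>j\<in>{..<n} - {i}. P $$ (i,j) * f j)"
    using i by (simp add: sum.remove)
  ultimately have "(\<Sum>j<n. P $$ (i,j) * f j) = Delta P i * f i"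
    using Delta_eq[OF i] by (simp add: left_diff_distrib)
  also have "\<dots> = 0" using alt gloop_iff[OF i] unfolding alternating_def by auto
  finally show ?thesis .
qed

text \<open>An alternating function that is nonzero at \<open>i\<close> has constant absolute value on the
  component of \<open>i\<close>, and its sign classes form a bipartition of that component.\<close>

lemma alternating_bipartite:
  assumes alt: "alternating f" and fi: "f i \<noteq> 0"
  shows "bipartite P (comp P i)"
proof -
  define C where "C = comp P i"
  have "\<bar>f w\<bar> = \<bar>f i\<bar>" if "(gedge P)\<^sup>*\<^sup>* i w" for w
    using that by (induction rule: rtranclp_induct) (use alt in \<open>auto simp: alternating_def\<close>)
  hence nz: "f w \<noteq> 0" if "w \<in> C" for w
    using that fi unfolding C_def comp_def by fastforce
  have "bipartite_with P C {w\<in>C. f w > 0} {w\<in>C. f w < 0}"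
    unfolding bipartite_with_def
  proof (intro conjI ballI impI)
    show "{w \<in> C. 0 < f w} \<union> {w \<in> C. f w < 0} = C"
      using nz by (auto simp: linorder_neq_iff)
    show "\<not> gloop P v" if "v \<in> C" for v
      using nz[OF that] alt unfolding alternating_def by blast
    show "u \<in> {w \<in> C. 0 < f w} \<longleftrightarrow> v \<in> {w \<in> C. f w < 0}" if "u \<in> C" "v \<in> C" "gedge P u v" for u v
      using that alt unfolding alternating_def by auto
  qed auto
  thus ?thesis unfolding bipartite_def C_def by blast
qed

end

definition prefix_sum :: "('a \<Rightarrow> nat) \<Rightarrow> 'a list \<Rightarrow> nat \<Rightarrow> nat" where
  "prefix_sum f xs k = sum_list (map f (take k xs))"

lemma prefix_sum_0[simp]: "prefix_sum f xs 0 = 0"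
  unfolding prefix_sum_def by simp

lemma prefix_sum_Suc: "k < length xs \<Longrightarrow> prefix_sum f xs (Suc k) = prefix_sum f xs k + f (xs ! k)"
  unfolding prefix_sum_def by (simp add: take_Suc_conv_app_nth)

lemma prefix_sum_total: "length xs \<le> k \<Longrightarrow> prefix_sum f xs k = sum_list (map f xs)"
  unfolding prefix_sum_def by simp

lemma prefix_sum_mono: "k \<le> k' \<Longrightarrow> prefix_sum f xs k \<le> prefix_sum f xs k'"
proof (induction k' rule: dec_induct)
  case (step k')
  thus ?case by (cases "k' < length xs") (auto simp: prefix_sum_Suc prefix_sum_total)
qed simp

lemma prefix_sum_le_total: "prefix_sum f xs k \<le> sum_list (map f xs)"
  using prefix_sum_mono[of k "max k (length xs)" f xs] prefix_sum_total[of xs "max k (length xs)" f]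
  by simp

lemma prefix_sum_cover:
  assumes "i < sum_list (map f xs)"
  shows "\<exists>k < length xs. prefix_sum f xs k \<le> i \<and> i < prefix_sum f xs (Suc k)"
proof -
  have "\<exists>k < K. prefix_sum f xs k \<le> i \<and> i < prefix_sum f xs (Suc k)" if "i < prefix_sum f xs K" for K
    using that
  proof (induction K)
    case (Suc K)
    thus ?case by (cases "i < prefix_sum f xs K") (auto intro: less_SucI)
  qed simp
  moreover have "prefix_sum f xs (length xs) = sum_list (map f xs)" by (rule prefix_sum_total) simp
  ultimately show ?thesis using assms by simp
qed

lemma prefix_sum_unique:
  assumes "prefix_sum f xs k \<le> i" "i < prefix_sum f xs (Suc k)"
    and "prefix_sum f xs k' \<le> i" "i < prefix_sum f xs (Suc k')"
  shows "k = k'"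
proof (rule ccontr)
  assume "k \<noteq> k'"
  then consider "Suc k \<le> k'" | "Suc k' \<le> k" by linarith
  thus False by cases (use assms prefix_sum_mono[of "Suc k" k' f xs] prefix_sum_mono[of "Suc k'" k f xs] in linarith)+
qed

lemma diag_block_mat_entry:
  assumes "k < length As" "prefix_sum dim_row As k \<le> i" "i < prefix_sum dim_row As (Suc k)"
    and "j < dim_col (diag_block_mat As)"
  shows "diag_block_mat As $$ (i,j) =
    (if prefix_sum dim_col As k \<le> j \<and> j < prefix_sum dim_col As (Suc k)
     then (As ! k) $$ (i - prefix_sum dim_row As k, j - prefix_sum dim_col As k) else 0)"
  using assms
proof (induction As arbitrary: k i j)
  case (Cons A As)
  let ?B = "diag_block_mat As"
  have dims: "dim_row ?B = sum_list (map dim_row As)" "dim_col ?B = sum_list (map dim_col As)"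
    using dim_diag_block_mat by auto
  have i_lt: "i < dim_row A + dim_row ?B"
    using Cons(4) prefix_sum_le_total[of dim_row "A # As" "Suc k"] dims by simp
  have j_lt: "j < dim_col A + dim_col ?B" using Cons(5) by (simp add: Let_def)
  show ?case
  proof (cases k)
    case 0
    thus ?thesis using Cons(3-5) i_lt j_lt by (auto simp: Let_def prefix_sum_def)
  next
    case (Suc k')
    have k': "k' < length As" using Cons(2) Suc by simp
    have offs: "prefix_sum g (A # As) (Suc k'') = g A + prefix_sum g As k''" for g :: "'a mat \<Rightarrow> nat" and k''
      unfolding prefix_sum_def by simp
    have i1: "dim_row A \<le> i" using Cons(3) offs Suc by simp
    have IH: "j - dim_col A < dim_col ?B \<Longrightarrow> ?B $$ (i - dim_row A, j - dim_col A) =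
       (if prefix_sum dim_col As k' \<le> j - dim_col A \<and> j - dim_col A < prefix_sum dim_col As (Suc k')
        then (As ! k') $$ (i - dim_row A - prefix_sum dim_row As k', j - dim_col A - prefix_sum dim_col As k')
        else 0)"
      using Cons.IH[OF k', of "i - dim_row A" "j - dim_col A"] Cons(3,4) offs Suc by simp
    show ?thesis
    proof (cases "j < dim_col A")
      case True
      thus ?thesis using i1 i_lt j_lt offs Suc by (simp add: Let_def)
    next
      case False
      thus ?thesis using i1 i_lt j_lt offs IH Suc by (auto simp: Let_def)
    qed
  qed
qed simp

lemma Ublock_dims[simp]: "dim_row (Ublock p q) = p + q" "dim_col (Ublock p q) = p + q - 1"
  unfolding Ublock_def by auto

lemma Ublock_entry: "a < p + q \<Longrightarrow> b < p + q - 1 \<Longrightarrow>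
  Ublock p q $$ (a,b) = (if a = 0 then 1 else if b = a - 1 then (if a < p then -1 else 1) else 0)"
  unfolding Ublock_def by simp

text \<open>The block structure of the theorem: the bipartite components occupy consecutive
  vertex intervals \<open>[off k, off (k+1))\<close>, first class first, and the remaining vertices
  \<open>[R, n)\<close> lie in non-bipartite components.\<close>

locale bipartite_blocks = signless_laplacian_graph n P for n P +
  fixes ps :: "(nat \<times> nat) list"
  assumes p_pos: "\<forall>(p,q) \<in> set ps. p \<ge> 1"
    and size: "sum_list (map (\<lambda>(p,q). p + q) ps) \<le> n"
    and blocks: "\<forall>k < length ps.
        comp P (off ps k) = {off ps k ..< off ps (Suc k)} \<and>
        bipartite_with P {off ps k ..< off ps (Suc k)}
          {off ps k ..< off ps k + fst (ps ! k)}
          {off ps k + fst (ps ! k) ..< off ps (Suc k)}"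
    and rest: "\<forall>v. sum_list (map (\<lambda>(p,q). p + q) ps) \<le> v \<and> v < n \<longrightarrow> \<not> bipartite P (comp P v)"
begin

abbreviation "r \<equiv> length ps"
abbreviation "R \<equiv> sum_list (map (\<lambda>(p,q). p + q) ps)"
abbreviation "pp k \<equiv> fst (ps ! k)"
abbreviation "qq k \<equiv> snd (ps ! k)"

lemma off_prefix_sum: "off ps k = prefix_sum (\<lambda>(p,q). p + q) ps k"
  unfolding off_def prefix_sum_def ..

lemma pp_pos: "k < r \<Longrightarrow> pp k \<ge> 1"
  using p_pos nth_mem[of k ps] by (cases "ps ! k") auto

lemma off_Suc: "k < r \<Longrightarrow> off ps (Suc k) = off ps k + pp k + qq k"
  unfolding off_prefix_sum by (simp add: prefix_sum_Suc split: prod.splits)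

lemma off_le_R: "off ps k \<le> R"
  unfolding off_prefix_sum by (rule prefix_sum_le_total)

lemma off_total: "off ps r = R"
  unfolding off_prefix_sum by (simp add: prefix_sum_total)

lemma block_cover:
  assumes "i < R"
  obtains k where "k < r" "off ps k \<le> i" "i < off ps (Suc k)"
  using prefix_sum_cover[OF assms] unfolding off_prefix_sum by blast

lemma block_unique:
  "off ps k \<le> i \<Longrightarrow> i < off ps (Suc k) \<Longrightarrow> off ps k' \<le> i \<Longrightarrow> i < off ps (Suc k') \<Longrightarrow> k = k'"
  unfolding off_prefix_sum by (rule prefix_sum_unique)

lemma block_bipartite: "k < r \<Longrightarrow> bipartite_with P {off ps k..<off ps (Suc k)}
   {off ps k..<off ps k + pp k} {off ps k + pp k..<off ps (Suc k)}"
  using blocks by auto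

lemma block_reach:
  assumes "k < r"
  shows "(gedge P)\<^sup>*\<^sup>* (off ps k) w \<longleftrightarrow> off ps k \<le> w \<and> w < off ps (Suc k)"
proof -
  have "w \<in> comp P (off ps k) \<longleftrightarrow> w \<in> {off ps k..<off ps (Suc k)}" using blocks assms by auto
  thus ?thesis unfolding comp_def by simp
qed

lemma block_edge:
  assumes k: "k < r" and i: "off ps k \<le> i" "i < off ps (Suc k)" and e: "gedge P i j"
  shows "off ps k \<le> j \<and> j < off ps (Suc k)"
proof -
  have "(gedge P)\<^sup>*\<^sup>* (off ps k) i" using block_reach[OF k] i by simp
  hence "(gedge P)\<^sup>*\<^sup>* (off ps k) j" using e by (rule rtranclp.rtrancl_into_rtrancl)
  thus ?thesis using block_reach[OF k] by simp
qed

lemma rest_edge: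
  assumes i: "R \<le> i" and e: "gedge P i j"
  shows "R \<le> j"
proof (rule ccontr)
  assume "\<not> R \<le> j"
  hence "j < R" by simp
  then obtain k where k: "k < r" "off ps k \<le> j" "j < off ps (Suc k)" by (rule block_cover)
  from block_edge[OF k gedge_sym[OF e]] have "i < off ps (Suc k)" by auto
  thus False using i off_le_R[of "Suc k"] by simp
qed

text \<open>On this block structure they are exactly the alternating functions, i.e. the kernel of \<open>P\<close>.\<close>

definition block_signed :: "(nat \<Rightarrow> real) \<Rightarrow> bool" where
  "block_signed f \<longleftrightarrow>
    (\<forall>k<r. \<forall>i. off ps k \<le> i \<and> i < off ps k + pp k \<longrightarrow> f i = f (off ps k)) \<and>
    (\<forall>k<r. \<forall>i. off ps k + pp k \<le> i \<and> i < off ps (Suc k) \<longrightarrow> f i = - f (off ps k)) \<and>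
    (\<forall>i. R \<le> i \<and> i < n \<longrightarrow> f i = 0)"

lemma block_signedD:
  assumes "block_signed f"
  shows "k < r \<Longrightarrow> off ps k \<le> i \<Longrightarrow> i < off ps k + pp k \<Longrightarrow> f i = f (off ps k)"
    and "k < r \<Longrightarrow> off ps k + pp k \<le> i \<Longrightarrow> i < off ps (Suc k) \<Longrightarrow> f i = - f (off ps k)"
    and "R \<le> i \<Longrightarrow> i < n \<Longrightarrow> f i = 0"
  using assms unfolding block_signed_def by blast+

lemma alternating_block_signed:
  assumes alt: "alternating f"
  shows "block_signed f"
proof -
  have sides: "(off ps k \<le> w \<and> w < off ps k + pp k \<longrightarrow> f w = f (off ps k)) \<and>
      (off ps k + pp k \<le> w \<and> w < off ps (Suc k) \<longrightarrow> f w = - f (off ps k))"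
    if k: "k < r" and w: "(gedge P)\<^sup>*\<^sup>* (off ps k) w" for k w
    using w
  proof (induction rule: rtranclp_induct)
    case base
    then show ?case using pp_pos[OF k] by auto
  next
    case (step w w')
    have "(gedge P)\<^sup>*\<^sup>* (off ps k) w'" using step(1,2) by (rule rtranclp.rtrancl_into_rtrancl)
    hence ww': "off ps k \<le> w \<and> w < off ps (Suc k)" "off ps k \<le> w' \<and> w' < off ps (Suc k)"
      using step(1) block_reach[OF k] by blast+
    have "w \<in> {off ps k..<off ps k + pp k} \<longleftrightarrow> w' \<in> {off ps k + pp k..<off ps (Suc k)}"
      using block_bipartite[OF k] ww' step(2) unfolding bipartite_with_def by auto
    moreover have "f w' = - f w" using alt step(2) unfolding alternating_def by blast
    ultimately show ?case using step(3) ww' by auto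
  qed
  show ?thesis unfolding block_signed_def
  proof (intro conjI allI impI)
    fix k i assume k: "k < r" and i: "off ps k \<le> i \<and> i < off ps k + pp k"
    hence "(gedge P)\<^sup>*\<^sup>* (off ps k) i" using block_reach[OF k] off_Suc[OF k] by simp
    thus "f i = f (off ps k)" using sides[OF k] i by blast
  next
    fix k i assume k: "k < r" and i: "off ps k + pp k \<le> i \<and> i < off ps (Suc k)"
    hence "(gedge P)\<^sup>*\<^sup>* (off ps k) i" using block_reach[OF k] by simp
    thus "f i = - f (off ps k)" using sides[OF k] i by blast
  next
    fix i assume "R \<le> i \<and> i < n"
    thus "f i = 0" using alternating_bipartite[OF alt] rest by blast
  qed
qed

lemma bipartite_part_loopless: "i < R \<Longrightarrow> \<not> gloop P i"
proof -
  assume "i < R"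
  then obtain k where k: "k < r" "off ps k \<le> i" "i < off ps (Suc k)" by (rule block_cover)
  have "\<forall>v \<in> {off ps k..<off ps (Suc k)}. \<not> gloop P v"
    using block_bipartite[OF k(1)] unfolding bipartite_with_def by blast
  thus ?thesis using k by simp
qed

lemma block_edge_crosses:
  assumes k: "k < r" and i: "off ps k \<le> i" "i < off ps (Suc k)" and e: "gedge P i j"
  shows "i < off ps k + pp k \<longleftrightarrow> off ps k + pp k \<le> j"
proof -
  have j: "off ps k \<le> j" "j < off ps (Suc k)" using block_edge[OF k i e] by auto
  have "i \<in> {off ps k..<off ps k + pp k} \<longleftrightarrow> j \<in> {off ps k + pp k..<off ps (Suc k)}"
    using block_bipartite[OF k] i j e unfolding bipartite_with_def by simp
  thus ?thesis using i j by simp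
qed

lemma block_signed_alternating:
  assumes f: "block_signed f"
  shows "alternating f"
  unfolding alternating_def
proof (intro conjI allI impI)
  fix i assume loop: "gloop P i"
  hence "i < n" using P_carrier unfolding gloop_def by simp
  thus "f i = 0" using bipartite_part_loopless[of i] loop block_signedD(3)[OF f] by fastforce
next
  fix i j assume e: "gedge P i j"
  hence ij: "i < n" "j < n" using P_carrier unfolding gedge_def by auto
  show "f j = - f i"
  proof (cases "i < R")
    case True
    then obtain k where k: "k < r" "off ps k \<le> i" "i < off ps (Suc k)" by (rule block_cover)
    have j: "off ps k \<le> j" "j < off ps (Suc k)" using block_edge[OF k e] by auto
    note side = block_edge_crosses[OF k e]
    show ?thesis
    proof (cases "i < off ps k + pp k")
      case True
      thus ?thesis using side block_signedD(1)[OF f k(1) k(2)] block_signedD(2)[OF f k(1) _ j(2)] by simp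
    next
      case False
      thus ?thesis using side block_signedD(1)[OF f k(1) j(1)] block_signedD(2)[OF f k(1) _ k(3)] by simp
    qed
  next
    case False
    thus ?thesis using rest_edge[OF _ e] block_signedD(3)[OF f] ij by simp
  qed
qed


abbreviation "co k \<equiv> prefix_sum (\<lambda>(p,q). p + q - 1) ps k"
abbreviation "CR \<equiv> sum_list (map (\<lambda>(p,q). p + q - 1) ps)"
abbreviation "m \<equiv> CR + (n - R)"
abbreviation "U \<equiv> Umat ps (n - R)"
abbreviation "U_blocks \<equiv> map (\<lambda>(p,q). Ublock p q) ps @ [1\<^sub>m (n - R)]"

lemma co_Suc: "k < r \<Longrightarrow> co (Suc k) = co k + (pp k + qq k - 1)"
  by (simp add: prefix_sum_Suc split: prod.splits)

lemma co_le_CR: "co k \<le> CR"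
  by (rule prefix_sum_le_total)

lemma Ublock_dims_map:
  "map dim_row (map (\<lambda>(p,q). Ublock p q) xs) = map (\<lambda>(p,q). p + q) xs"
  "map dim_col (map (\<lambda>(p,q). Ublock p q) xs) = map (\<lambda>(p,q). p + q - 1) xs"
proof -
  have "dim_row \<circ> (\<lambda>(p,q). Ublock p q) = (\<lambda>(p,q). p + q)"
    "dim_col \<circ> (\<lambda>(p,q). Ublock p q) = (\<lambda>(p,q). p + q - 1)"
    by (auto simp: fun_eq_iff)
  thus "map dim_row (map (\<lambda>(p,q). Ublock p q) xs) = map (\<lambda>(p,q). p + q) xs"
    "map dim_col (map (\<lambda>(p,q). Ublock p q) xs) = map (\<lambda>(p,q). p + q - 1) xs"
    by simp_all
qed

lemma U_row_offsets: "k \<le> r \<Longrightarrow> prefix_sum dim_row U_blocks k = off ps k"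
  unfolding prefix_sum_def off_def by (simp add: take_map Ublock_dims_map del: map_map)

lemma U_col_offsets: "k \<le> r \<Longrightarrow> prefix_sum dim_col U_blocks k = co k"
  unfolding prefix_sum_def by (simp add: take_map Ublock_dims_map del: map_map)

lemma U_carrier: "U \<in> carrier_mat n m"
proof -
  have "dim_row U = n" unfolding Umat_def dim_diag_block_mat
    using size by (simp add: Ublock_dims_map del: map_map)
  moreover have "dim_col U = m" unfolding Umat_def dim_diag_block_mat
    by (simp add: Ublock_dims_map del: map_map)
  ultimately show ?thesis by auto
qed

lemma U_block:
  assumes k: "k < r" and i: "off ps k \<le> i" "i < off ps (Suc k)" and j: "j < m"
  shows "U $$ (i,j) = (if co k \<le> j \<and> j < co (Suc k)
    then Ublock (pp k) (qq k) $$ (i - off ps k, j - co k) else 0)"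
proof -
  have "U_blocks ! k = Ublock (pp k) (qq k)" using k by (simp add: nth_append split: prod.splits)
  thus ?thesis
    using diag_block_mat_entry[of k U_blocks i j] U_row_offsets[of k] U_row_offsets[of "Suc k"]
      U_col_offsets[of k] U_col_offsets[of "Suc k"] k i j U_carrier
    unfolding Umat_def by simp
qed

lemma U_rest:
  assumes i: "R \<le> i" "i < n" and j: "j < m"
  shows "U $$ (i,j) = (if CR \<le> j \<and> j - CR = i - R then 1 else 0)"
proof -
  have rows: "prefix_sum dim_row U_blocks r = R" "prefix_sum dim_row U_blocks (Suc r) = n"
    using U_row_offsets[of r] off_total size unfolding prefix_sum_def by (simp_all add: Ublock_dims_map del: map_map)
  have cols: "prefix_sum dim_col U_blocks r = CR" "prefix_sum dim_col U_blocks (Suc r) = m"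
    using U_col_offsets[of r] unfolding prefix_sum_def by (simp_all add: Ublock_dims_map prefix_sum_total del: map_map)
  have "U $$ (i,j) = (if CR \<le> j then 1\<^sub>m (n - R) $$ (i - R, j - CR) else 0)"
    using diag_block_mat_entry[of r U_blocks i j] rows cols i j U_carrier
    unfolding Umat_def by (simp add: nth_append)
  thus ?thesis using i j by auto
qed

text \<open>Column \<open>j\<close> of \<open>U\<close> belonging to block \<open>k\<close> (with \<open>b = j - co k\<close>) is
  \<open>e(off k) + \<sigma> e(off k + 1 + b)\<close>, where the sign \<open>\<sigma> = U_sign k b\<close> is \<open>-1\<close> if the vertex
  \<open>off k + 1 + b\<close> lies in the first class and \<open>+1\<close> otherwise; a column \<open>j \<ge> CR\<close> is the
  unit vector \<open>e(R + j - CR)\<close>.\<close>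

definition U_sign :: "nat \<Rightarrow> nat \<Rightarrow> real" where
  "U_sign k b = (if 1 + b < pp k then -1 else 1)"

lemma col_block_unique:
  "co k \<le> j \<Longrightarrow> j < co (Suc k) \<Longrightarrow> co k' \<le> j \<Longrightarrow> j < co (Suc k') \<Longrightarrow> k = k'"
  by (rule prefix_sum_unique)

lemma col_cover:
  assumes "j < m"
  obtains k where "k < r" "co k \<le> j" "j < co (Suc k)" | "CR \<le> j"
  using prefix_sum_cover[of j "\<lambda>(p,q). p + q - 1" ps] by (cases "j < CR") auto

lemma U_col_block:
  assumes k: "k < r" and j: "co k \<le> j" "j < co (Suc k)" and i: "i < n"
  shows "U $$ (i,j) = (if i = off ps k then 1 else 0) +
           (if i = off ps k + 1 + (j - co k) then U_sign k (j - co k) else 0)"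
proof -
  define b where "b = j - co k"
  have jm: "j < m" using j co_le_CR[of "Suc k"] by simp
  have b: "b < pp k + qq k - 1" using j co_Suc[OF k] unfolding b_def by simp
  have os: "off ps (Suc k) = off ps k + pp k + qq k" by (rule off_Suc[OF k])
  show ?thesis
  proof (cases "i < R")
    case True
    then obtain k' where k': "k' < r" "off ps k' \<le> i" "i < off ps (Suc k')" by (rule block_cover)
    show ?thesis
    proof (cases "k' = k")
      case True
      have a: "i - off ps k < pp k + qq k" using k' True os by simp
      have "U $$ (i,j) = Ublock (pp k) (qq k) $$ (i - off ps k, b)"
        using U_block[OF k, of i j] k' True j jm unfolding b_def by simp
      also have "\<dots> = (if i - off ps k = 0 then 1 else if b = i - off ps k - 1 then
          (if i - off ps k < pp k then -1 else 1) else 0)"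
        by (rule Ublock_entry[OF a b])
      finally show ?thesis using k' True unfolding b_def[symmetric] U_sign_def by auto
    next
      case False
      have "\<not> (co k' \<le> j \<and> j < co (Suc k'))" using col_block_unique[of k j k'] j False by auto
      hence "U $$ (i,j) = 0" using U_block[OF k'(1) k'(2,3) jm] by presburger
      moreover have "\<not> (off ps k \<le> i \<and> i < off ps (Suc k))"
        using block_unique[of k i k'] k' False by auto
      ultimately show ?thesis using b os unfolding b_def[symmetric] by auto
    qed
  next
    case False
    hence "U $$ (i,j) = 0" using U_rest[of i j] i jm j co_le_CR[of "Suc k"] by simp
    moreover have "off ps (Suc k) \<le> R" by (rule off_le_R)
    ultimately show ?thesis using b os False unfolding b_def[symmetric] by auto
  qed
qed

lemma U_col_rest:
  assumes j: "CR \<le> j" "j < m" and i: "i < n"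
  shows "U $$ (i,j) = (if i = R + (j - CR) then 1 else 0)"
proof (cases "i < R")
  case True
  then obtain k' where k': "k' < r" "off ps k' \<le> i" "i < off ps (Suc k')" by (rule block_cover)
  hence "U $$ (i,j) = 0" using U_block[OF k'(1) k'(2,3) j(2)] j co_le_CR[of "Suc k'"] by simp
  thus ?thesis using True by simp
next
  case False
  thus ?thesis using U_rest[OF _ i j(2)] j by auto
qed

lemma Ut_apply_block:
  assumes k: "k < r" and j: "co k \<le> j" "j < co (Suc k)"
  shows "(\<Sum>i<n. U $$ (i,j) * v i) = v (off ps k) + U_sign k (j - co k) * v (off ps k + 1 + (j - co k))"
proof -
  have lt: "off ps k + 1 + (j - co k) < n"
    using j co_Suc[OF k] off_Suc[OF k] off_le_R[of "Suc k"] size by simp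
  have "off ps k < n" using lt by simp
  thus ?thesis
    using lt U_col_block[OF k j]
    by (simp add: sum.distrib distrib_right if_distrib[of "\<lambda>x. x * v _"] cong: if_cong)
qed

lemma Ut_apply_rest:
  assumes j: "CR \<le> j" "j < m"
  shows "(\<Sum>i<n. U $$ (i,j) * v i) = v (R + (j - CR))"
proof -
  have "(\<Sum>i<n. U $$ (i,j) * v i) = (\<Sum>i<n. if i = R + (j - CR) then v i else 0)"
    using U_col_rest[OF j] by (intro sum.cong) auto
  thus ?thesis using j size by simp
qed

text \<open>The rows of \<open>U\<close> through the non-leading vertices of the blocks and through the
  non-bipartite part each contain a single nonzero entry; hence \<open>U\<close> is injective.\<close>

lemma U_row_block:
  assumes k: "k < r" and b: "b < pp k + qq k - 1" and j: "j < m"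
  shows "U $$ (off ps k + 1 + b, j) = (if j = co k + b then U_sign k b else 0)"
proof -
  have os: "off ps (Suc k) = off ps k + pp k + qq k" by (rule off_Suc[OF k])
  have cs: "co (Suc k) = co k + (pp k + qq k - 1)" by (rule co_Suc[OF k])
  have i: "off ps k \<le> off ps k + 1 + b" "off ps k + 1 + b < off ps (Suc k)" using b os by auto
  show ?thesis
  proof (cases "co k \<le> j \<and> j < co (Suc k)")
    case True
    have "U $$ (off ps k + 1 + b, j) = Ublock (pp k) (qq k) $$ (1 + b, j - co k)"
      using U_block[OF k i j] True by simp
    also have "\<dots> = (if j - co k = b then U_sign k b else 0)"
      using Ublock_entry[of "1 + b" "pp k" "qq k" "j - co k"] b True cs unfolding U_sign_def by auto
    finally show ?thesis using True by auto
  next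
    case False
    thus ?thesis using U_block[OF k i j] b cs by auto
  qed
qed

lemma U_row_rest:
  "d < n - R \<Longrightarrow> j < m \<Longrightarrow> U $$ (R + d, j) = (if j = CR + d then 1 else 0)"
  using U_rest[of "R + d" j] by auto

lemma U_injective:
  assumes x: "x \<in> carrier_vec m" and z: "U *\<^sub>v x = 0\<^sub>v n"
  shows "x = 0\<^sub>v m"
proof -
  have row: "(\<Sum>j'<m. U $$ (i,j') * x $ j') = 0" if "i < n" for i
    using mult_mat_vec_entry[OF U_carrier x that] z that by simp
  have "x $ j = 0" if j: "j < m" for j
    using j
  proof (cases rule: col_cover)
    case (1 k)
    define b where "b = j - co k"
    have b: "b < pp k + qq k - 1" using 1 co_Suc[OF 1(1)] unfolding b_def by simp
    have lt: "off ps k + 1 + b < n" using b off_Suc[OF 1(1)] off_le_R[of "Suc k"] size by simp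
    have "(\<Sum>j'<m. U $$ (off ps k + 1 + b, j') * x $ j') = (\<Sum>j'<m. if j' = co k + b then U_sign k b * x $ j' else 0)"
      using U_row_block[OF 1(1) b] by (intro sum.cong) auto
    also have "\<dots> = U_sign k b * x $ j" using j 1 unfolding b_def by simp
    finally show ?thesis using row[OF lt] unfolding U_sign_def by (simp split: if_splits)
  next
    case 2
    have "(\<Sum>j'<m. U $$ (R + (j - CR), j') * x $ j') = (\<Sum>j'<m. if j' = CR + (j - CR) then x $ j' else 0)"
      using U_row_rest[of "j - CR"] j 2 by (intro sum.cong) auto
    also have "\<dots> = x $ j" using j 2 by simp
    finally show ?thesis using row[of "R + (j - CR)"] j 2 size by simp
  qed
  thus ?thesis using x by (intro eq_vecI) auto
qed

text \<open>A vector orthogonal to all columns of \<open>U\<close> is block-signed: the block columns force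
  \<open>v(i) = -\<sigma> v(off k)\<close> inside block \<open>k\<close>, and the unit columns force \<open>v = 0\<close> on the non-bipartite part.\<close>

lemma Ut_kernel_block_signed:
  assumes z: "\<And>j. j < m \<Longrightarrow> (\<Sum>i<n. U $$ (i,j) * v i) = 0"
  shows "block_signed v"
proof -
  have step: "v (off ps k) + U_sign k (i - off ps k - 1) * v i = 0"
    if k: "k < r" and i: "off ps k < i" "i < off ps (Suc k)" for k i
  proof -
    define b where "b = i - off ps k - 1"
    have jj: "co k \<le> co k + b" "co k + b < co (Suc k)"
      using i off_Suc[OF k] co_Suc[OF k] unfolding b_def by auto
    have "co k + b < m" using jj co_le_CR[of "Suc k"] by simp
    thus ?thesis using Ut_apply_block[OF k jj, of v] z i unfolding b_def by simp
  qed
  show ?thesis unfolding block_signed_def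
  proof (intro conjI allI impI)
    fix k i assume k: "k < r" and i: "off ps k \<le> i \<and> i < off ps k + pp k"
    show "v i = v (off ps k)"
    proof (cases "i = off ps k")
      case False
      hence "off ps k < i" "1 + (i - off ps k - 1) < pp k" using i by auto
      thus ?thesis using step[OF k, of i] i off_Suc[OF k] unfolding U_sign_def by simp
    qed simp
  next
    fix k i assume k: "k < r" and i: "off ps k + pp k \<le> i \<and> i < off ps (Suc k)"
    hence "off ps k < i" "\<not> 1 + (i - off ps k - 1) < pp k" using pp_pos[OF k] by auto
    thus "v i = - v (off ps k)" using step[OF k, of i] i unfolding U_sign_def by simp
  next
    fix i assume i: "R \<le> i \<and> i < n"
    have "CR \<le> CR + (i - R)" "CR + (i - R) < m" using i by auto
    thus "v i = 0" using Ut_apply_rest[of "CR + (i - R)" v] z i by simp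
  qed
qed


text \<open>These \<open>r\<close> functions form a basis of the block-signed functions, i.e. of the kernel of \<open>P\<close>.\<close>

definition block_sign :: "nat \<Rightarrow> nat \<Rightarrow> real" where
  "block_sign k i = (if off ps k \<le> i \<and> i < off ps k + pp k then 1
     else if off ps k + pp k \<le> i \<and> i < off ps (Suc k) then -1 else 0)"

lemma block_sign_outside: "k < r \<Longrightarrow> \<not> (off ps k \<le> i \<and> i < off ps (Suc k)) \<Longrightarrow> block_sign k i = 0"
  using off_Suc[of k] unfolding block_sign_def by auto

lemma offset_in_block: "k < r \<Longrightarrow> off ps k < off ps (Suc k)"
  using off_Suc[of k] pp_pos[of k] by simp

lemma block_sign_at_offset:
  assumes "k < r" "k' < r"
  shows "block_sign k' (off ps k) = (if k' = k then 1 else 0)"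
proof (cases "k' = k")
  case True
  thus ?thesis using pp_pos[OF assms(1)] unfolding block_sign_def by simp
next
  case False
  hence "\<not> (off ps k' \<le> off ps k \<and> off ps k < off ps (Suc k'))"
    using block_unique[of k' "off ps k" k] offset_in_block[OF assms(1)] by auto
  thus ?thesis using block_sign_outside[OF assms(2)] False by simp
qed

lemma block_sign_signed:
  assumes k: "k < r"
  shows "block_signed (block_sign k)"
  unfolding block_signed_def
proof (intro conjI allI impI)
  fix k' i assume k': "k' < r" and i: "off ps k' \<le> i \<and> i < off ps k' + pp k'"
  have "block_sign k i = block_sign k (off ps k')" if "k' \<noteq> k"
    using block_sign_outside[OF k] block_unique[of k i k'] block_unique[of k "off ps k'" k']
      i off_Suc[OF k'] offset_in_block[OF k'] that by fastforce
  thus "block_sign k i = block_sign k (off ps k')"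
    using i pp_pos[OF k] unfolding block_sign_def by (cases "k' = k") auto
next
  fix k' i assume k': "k' < r" and i: "off ps k' + pp k' \<le> i \<and> i < off ps (Suc k')"
  have "block_sign k i = - block_sign k (off ps k')" if "k' \<noteq> k"
    using block_sign_outside[OF k] block_unique[of k i k'] block_unique[of k "off ps k'" k']
      i offset_in_block[OF k'] that by fastforce
  thus "block_sign k i = - block_sign k (off ps k')"
    using i pp_pos[OF k] unfolding block_sign_def by (cases "k' = k") auto
next
  fix i assume "R \<le> i \<and> i < n"
  thus "block_sign k i = 0" using block_sign_outside[OF k] off_le_R[of "Suc k"] by simp
qed

lemma block_sign_orthogonal_U:
  assumes k: "k < r" and j: "j < m"
  shows "(\<Sum>i<n. U $$ (i,j) * block_sign k i) = 0"
  using j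
proof (cases rule: col_cover)
  case (1 k')
  define b where "b = j - co k'"
  have b: "b < pp k' + qq k' - 1" using 1 co_Suc[OF 1(1)] unfolding b_def by simp
  have "off ps k' + 1 + b < off ps (Suc k')" using b off_Suc[OF 1(1)] by simp
  moreover have "off ps k' < off ps k' + 1 + b" by simp
  ultimately have same: "block_sign k (off ps k' + 1 + b) = (if k' = k then - U_sign k' b else 0)"
  proof (cases "k' = k")
    case True
    thus ?thesis using \<open>off ps k' + 1 + b < off ps (Suc k')\<close> unfolding block_sign_def U_sign_def by auto
  next
    case False
    hence "\<not> (off ps k \<le> off ps k' + 1 + b \<and> off ps k' + 1 + b < off ps (Suc k))"
      using block_unique[of k "off ps k' + 1 + b" k'] \<open>off ps k' + 1 + b < off ps (Suc k')\<close> by auto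
    thus ?thesis using block_sign_outside[OF k] False by simp
  qed
  have "(\<Sum>i<n. U $$ (i,j) * block_sign k i) =
      block_sign k (off ps k') + U_sign k' b * block_sign k (off ps k' + 1 + b)"
    using Ut_apply_block[OF 1] unfolding b_def by simp
  thus ?thesis using same block_sign_at_offset[OF 1(1) k] unfolding U_sign_def by auto
next
  case 2
  have "\<not> (off ps k \<le> R + (j - CR) \<and> R + (j - CR) < off ps (Suc k))" using off_le_R[of "Suc k"] by simp
  thus ?thesis using Ut_apply_rest[OF 2 j] block_sign_outside[OF k] by simp
qed

text \<open>A block-signed function orthogonal to all signed block indicators vanishes:
  the inner product with the \<open>k\<close>-th indicator is \<open>(p\<^sub>k + q\<^sub>k) f(off k)\<close>.\<close>

lemma block_signed_orthogonal_zero: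
  assumes f: "block_signed f" and orth: "\<And>k. k < r \<Longrightarrow> (\<Sum>i<n. block_sign k i * f i) = 0"
    and i: "i < n"
  shows "f i = 0"
proof -
  have lead: "f (off ps k) = 0" if k: "k < r" for k
  proof -
    have os: "off ps (Suc k) = off ps k + pp k + qq k" by (rule off_Suc[OF k])
    have "block_sign k i * f i = (if i \<in> {off ps k..<off ps (Suc k)} then f (off ps k) else 0)" for i
      using block_signedD(1,2)[OF f k, of i] os unfolding block_sign_def by auto
    hence "(\<Sum>i<n. block_sign k i * f i) = (\<Sum>i<n. if i \<in> {off ps k..<off ps (Suc k)} then f (off ps k) else 0)"
      by (intro sum.cong) auto
    also have "\<dots> = (\<Sum>i\<in>{..<n} \<inter> {off ps k..<off ps (Suc k)}. f (off ps k))"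
      by (rule sum.inter_restrict[symmetric]) simp
    also have "{..<n} \<inter> {off ps k..<off ps (Suc k)} = {off ps k..<off ps (Suc k)}"
      using off_le_R[of "Suc k"] size by auto
    finally have "real (pp k + qq k) * f (off ps k) = 0" using orth[OF k] os by simp
    thus ?thesis using pp_pos[OF k] by simp
  qed
  show ?thesis
  proof (cases "i < R")
    case True
    then obtain k where k: "k < r" "off ps k \<le> i" "i < off ps (Suc k)" by (rule block_cover)
    thus ?thesis using block_signedD(1,2)[OF f k(1), of i] lead[OF k(1)]
      by (cases "i < off ps k + pp k") auto
  qed (use block_signedD(3)[OF f _ i] in simp)
qed


text \<open>The matrix \<open>K\<close> whose independent columns are the signed block indicators: it spans
  the kernel of \<open>P\<close> and is orthogonal to \<open>U\<close>. These are the hypotheses of the range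
  criterion \<open>range_of_semidefinite\<close>.\<close>

definition K :: "real mat" where
  "K = mat n r (\<lambda>(i,k). block_sign k i)"

lemma K_carrier: "K \<in> carrier_mat n r"
  unfolding K_def by auto

lemma P_K: "P * K = 0\<^sub>m n r"
proof (rule eq_matI)
  fix i k assume "i < dim_row (0\<^sub>m n r :: real mat)" "k < dim_col (0\<^sub>m n r :: real mat)"
  hence ik: "i < n" "k < r" by auto
  have "(P * K) $$ (i,k) = (\<Sum>j<n. P $$ (i,j) * block_sign k j)"
    using mult_mat_entry[OF P_carrier K_carrier ik] ik by (simp add: K_def)
  also have "\<dots> = 0"
    by (rule alternating_kernel[OF block_signed_alternating[OF block_sign_signed[OF ik(2)]] ik(1)])
  finally show "(P * K) $$ (i,k) = 0\<^sub>m n r $$ (i,k)" using ik by simp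
qed (use P_carrier K_carrier in auto)

lemma K_injective:
  assumes c: "c \<in> carrier_vec r" and z: "K *\<^sub>v c = 0\<^sub>v n"
  shows "c = 0\<^sub>v r"
proof (rule eq_vecI)
  fix k assume "k < dim_vec (0\<^sub>v r :: real vec)"
  hence k: "k < r" by simp
  have lt: "off ps k < n" using offset_in_block[OF k] off_le_R[of "Suc k"] size by simp
  have "(K *\<^sub>v c) $ off ps k = (\<Sum>k'<r. K $$ (off ps k, k') * c $ k')"
    by (rule mult_mat_vec_entry[OF K_carrier c lt])
  also have "\<dots> = (\<Sum>k'<r. if k' = k then c $ k' else 0)"
    using lt k by (intro sum.cong) (auto simp: K_def block_sign_at_offset)
  also have "\<dots> = c $ k" using k by simp
  finally show "c $ k = 0\<^sub>v r $ k" using z lt k by simp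
qed (use c in simp)

lemma Kt_U: "K\<^sup>T * U = 0\<^sub>m r m"
proof (rule eq_matI)
  fix k j assume "k < dim_row (0\<^sub>m r m :: real mat)" "j < dim_col (0\<^sub>m r m :: real mat)"
  hence kj: "k < r" "j < m" by auto
  have "(K\<^sup>T * U) $$ (k,j) = (\<Sum>i<n. U $$ (i,j) * block_sign k i)"
    using mult_mat_entry[of "K\<^sup>T" r n U m k j] K_carrier U_carrier kj
    by (simp add: K_def mult.commute)
  thus "(K\<^sup>T * U) $$ (k,j) = 0\<^sub>m r m $$ (k,j)" using block_sign_orthogonal_U[OF kj] kj by simp
qed (use K_carrier U_carrier in auto)

text \<open>\<open>P\<close> is positive semidefinite, and a vector with \<open>v\<^sup>T P v = 0\<close> and \<open>K\<^sup>T v = 0\<close> is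
  alternating, hence block-signed and orthogonal to all block indicators, hence zero.\<close>

lemma P_psd: "v \<in> carrier_vec n \<Longrightarrow> v \<bullet> (P *\<^sub>v v) \<ge> 0"
  using form_vec form_nonneg by simp

lemma kernel_spanned_by_K:
  assumes v: "v \<in> carrier_vec n" and Pv: "v \<bullet> (P *\<^sub>v v) = 0" and Kv: "K\<^sup>T *\<^sub>v v = 0\<^sub>v r"
  shows "v = 0\<^sub>v n"
proof -
  have signed: "block_signed (\<lambda>i. v $ i)"
    using alternating_block_signed form_zero_alternating form_vec[OF v] Pv by simp
  have "(\<Sum>i<n. block_sign k i * v $ i) = 0" if k: "k < r" for k
  proof -
    have "(K\<^sup>T *\<^sub>v v) $ k = (\<Sum>i<n. K\<^sup>T $$ (k,i) * v $ i)"
      using mult_mat_vec_entry[of "K\<^sup>T" r n v k] K_carrier v k by simp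
    also have "\<dots> = (\<Sum>i<n. block_sign k i * v $ i)"
      using k by (intro sum.cong) (auto simp: K_def)
    finally show ?thesis using Kv k by simp
  qed
  hence "v $ i = 0" if "i < n" for i
    using block_signed_orthogonal_zero[OF signed _ that] by blast
  thus ?thesis using v by (intro eq_vecI) auto
qed

text \<open>Vectors orthogonal to the columns of \<open>U\<close> are block-signed, hence alternating, hence
  in the kernel of \<open>P\<close>.\<close>

lemma Ut_kernel_in_P_kernel:
  assumes v: "v \<in> carrier_vec n" and Utv: "U\<^sup>T *\<^sub>v v = 0\<^sub>v m"
  shows "P *\<^sub>v v = 0\<^sub>v n"
proof -
  have "(\<Sum>i<n. U $$ (i,j) * v $ i) = 0" if j: "j < m" for j
    using mult_mat_vec_entry[of "U\<^sup>T" m n v j] U_carrier v Utv j by simp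
  hence alt: "alternating (\<lambda>i. v $ i)"
    by (intro block_signed_alternating Ut_kernel_block_signed)
  have "(P *\<^sub>v v) $ i = 0" if "i < n" for i
    using mult_mat_vec_entry[OF P_carrier v that] alternating_kernel[OF alt that] by simp
  thus ?thesis using P_carrier by (intro eq_vecI) auto
qed

text \<open>For \<open>t \<ge> 0\<close> the matrix \<open>S + t P\<close> is \<open>\<alpha>\<close>-coercive, since \<open>P\<close> is positive semidefinite
  and \<open>S = \<alpha> I + l J\<close> with \<open>l \<ge> 0\<close>.\<close>

lemma regularized_coercive:
  assumes l: "l \<ge> 0" and t: "t \<ge> 0"
  shows "coercive \<alpha> (Smat n \<alpha> l + t \<cdot>\<^sub>m P)"
  unfolding coercive_def
proof
  fix v :: "real vec" assume "v \<in> carrier_vec (dim_row (Smat n \<alpha> l + t \<cdot>\<^sub>m P))"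
  hence v: "v \<in> carrier_vec n" using P_carrier by simp
  have "v \<bullet> ((Smat n \<alpha> l + t \<cdot>\<^sub>m P) *\<^sub>v v) =
      (\<Sum>i<n. \<Sum>j<n. (Smat n \<alpha> l + t \<cdot>\<^sub>m P) $$ (i,j) * v $ i * v $ j)"
    using Smat_carrier P_carrier by (intro quadratic_form_sum[OF _ v]) auto
  also have "\<dots> = (\<Sum>i<n. \<Sum>j<n. Smat n \<alpha> l $$ (i,j) * v $ i * v $ j)
      + t * (\<Sum>i<n. \<Sum>j<n. P $$ (i,j) * v $ i * v $ j)"
    using Smat_carrier P_carrier by (simp add: sum.distrib sum_distrib_left algebra_simps)
  also have "\<dots> = v \<bullet> (Smat n \<alpha> l *\<^sub>v v) + t * (v \<bullet> (P *\<^sub>v v))"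
    using quadratic_form_sum[OF Smat_carrier v] quadratic_form_sum[OF P_carrier v] by simp
  also have "\<dots> = \<alpha> * (v \<bullet> v) + l * (\<Sum>i<n. v $ i)^2 + t * (v \<bullet> (P *\<^sub>v v))"
    using Smat_form[OF v] by simp
  finally show "\<alpha> * (v \<bullet> v) \<le> v \<bullet> ((Smat n \<alpha> l + t \<cdot>\<^sub>m P) *\<^sub>v v)"
    using P_psd[OF v] l t by (simp add: add_nonneg_nonneg)
qed

lemma regularized_inverse_convergence:
  assumes \<alpha>: "\<alpha> > 0" and l: "l \<ge> 0"
  defines "S \<equiv> Smat n \<alpha> l"
  shows "pos_def_mat (U\<^sup>T * minv S * U) \<and>
    (\<forall>i<n. \<forall>j<n. ((\<lambda>t. minv (S + t \<cdot>\<^sub>m P) $$ (i,j)) \<longlongrightarrow>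
       (minv S - minv S * U * minv (U\<^sup>T * minv S * U) * U\<^sup>T * minv S) $$ (i,j)) at_top)"
proof -
  have S: "S \<in> carrier_mat n n" unfolding S_def by (rule Smat_carrier)
  have SP: "S + t \<cdot>\<^sub>m P \<in> carrier_mat n n" for t using S P_carrier by auto
  have M: "minv (S + t \<cdot>\<^sub>m P) \<in> carrier_mat n n \<and> minv (S + t \<cdot>\<^sub>m P) * (S + t \<cdot>\<^sub>m P) = 1\<^sub>m n"
    if "t \<ge> 0" for t
    using coercive_invertible[OF SP \<alpha>] regularized_coercive[OF l that] unfolding S_def by auto
  have bound: "\<bar>minv (S + t \<cdot>\<^sub>m P) $$ (i,j)\<bar> \<le> 1 / \<alpha>" if "t \<ge> 0" "i < n" "j < n" for t i j
    using coercive_inverse_entry_bound[OF SP \<alpha> _ that(2,3)] regularized_coercive[OF l that(1)]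
    unfolding S_def by auto
  have S0: "S + 0 \<cdot>\<^sub>m P = S" using S P_carrier by auto
  have S_coercive: "coercive \<alpha> S" using regularized_coercive[OF l order_refl, where \<alpha> = \<alpha>] S0 unfolding S_def by simp
  have Si: "minv S \<in> carrier_mat n n" "S * minv S = 1\<^sub>m n"
    using coercive_invertible[OF S \<alpha> S_coercive] by auto
  have S_pos: "w \<bullet> (S *\<^sub>v w) > 0" if w: "w \<in> carrier_vec n" "w \<noteq> 0\<^sub>v n" for w
  proof -
    have "\<alpha> * (w \<bullet> w) \<le> w \<bullet> (S *\<^sub>v w)" using S_coercive S w(1) unfolding coercive_def by auto
    moreover have "0 < \<alpha> * (w \<bullet> w)" using \<alpha> scalar_prod_self_pos[OF w] by simp
    ultimately show ?thesis by linarith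
  qed
  have S_sym: "S\<^sup>T = S" unfolding S_def by (rule Smat_symmetric)
  have Si_sym: "(minv S)\<^sup>T = minv S" by (rule inverse_symmetric[OF S Si S_sym])
  have W: "pos_def_mat (U\<^sup>T * minv S * U)"
    by (rule congruence_pos_def[OF Si(1) Si_sym inverse_pos_def[OF S Si S_sym S_pos] U_carrier U_injective])
  have Wi: "minv (U\<^sup>T * minv S * U) \<in> carrier_mat m m"
    "(U\<^sup>T * minv S * U) * minv (U\<^sup>T * minv S * U) = 1\<^sub>m m"
    using pos_def_invertible[OF W] Si U_carrier by auto
  obtain Y where Y: "Y \<in> carrier_mat n m" "P * Y = U"
    using range_of_semidefinite[OF P_carrier P_transpose P_psd K_carrier P_K K_injective
        kernel_spanned_by_K U_carrier Kt_U] by blast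
  show ?thesis
    using W regularized_inverse_limit[OF S P_carrier U_carrier Si Wi Ut_kernel_in_P_kernel Y M bound]
    by blast
qed

end

theorem proposition4p7:
  fixes n :: nat and l \<alpha> :: real and P :: "real mat" and ps :: "(nat \<times> nat) list"
  assumes n3: "n \<ge> 3" and lpos: "l > 0" and alpha: "\<alpha> \<ge> (real n - 2) * l"
    and SL: "signless_laplacian n P"
    and p_pos: "\<forall>(p,q) \<in> set ps. p \<ge> 1"
    and size: "sum_list (map (\<lambda>(p,q). p + q) ps) \<le> n"
    and blocks: "\<forall>k < length ps.
        comp P (off ps k) = {off ps k ..< off ps (Suc k)} \<and>
        bipartite_with P {off ps k ..< off ps (Suc k)}
          {off ps k ..< off ps k + fst (ps ! k)}
          {off ps k + fst (ps ! k) ..< off ps (Suc k)}"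
    and rest: "\<forall>v. sum_list (map (\<lambda>(p,q). p + q) ps) \<le> v \<and> v < n \<longrightarrow> \<not> bipartite P (comp P v)"
  shows "pos_def_mat ((Umat ps (n - sum_list (map (\<lambda>(p,q). p + q) ps)))\<^sup>T * minv (Smat n \<alpha> l)
                       * Umat ps (n - sum_list (map (\<lambda>(p,q). p + q) ps))) \<and>
    (\<forall>i < n. \<forall>j < n.
       ((\<lambda>t. minv (Smat n \<alpha> l + t \<cdot>\<^sub>m P) $$ (i,j)) \<longlongrightarrow>
         (let S = Smat n \<alpha> l; U = Umat ps (n - sum_list (map (\<lambda>(p,q). p + q) ps)) in
          minv S - minv S * U * minv (U\<^sup>T * minv S * U) * U\<^sup>T * minv S) $$ (i,j)) at_top)"
proof -
  interpret bipartite_blocks n P ps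
    unfolding bipartite_blocks_def bipartite_blocks_axioms_def signless_laplacian_graph_def
    using SL p_pos size blocks rest by blast
  have "(real n - 2) * l \<ge> l" using n3 lpos by simp
  hence "\<alpha> > 0" using alpha lpos by linarith
  thus ?thesis
    using regularized_inverse_convergence[of \<alpha> l] lpos unfolding Let_def by simp
qed

end
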